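(* Let $X$ be a compact metric space of negative type. Then the supremum defining $|X|$ is attained (i.e. $X$ is weighted) if and only if there exists $w\in\mathscr{M}(X)$ with $Zw(x)=1$ for all $x\in X$. In this case $w(X)\neq 0$, $|X|=w(X)$, and the supremum in the definition of $|X|$ is attained exactly at $\mu=w/w(X)$ (uniquely).
   Context: Let $(X,d)$ be a compact metric space, $Z(x,y)=e^{-d(x,y)}$, $\mathscr{M}(X)$ the space of finite signed Borel measures on $X$. For $\mu\in\mathscr{M}(X)$, $Z\mu(x)=\int_X Z(x,y)\,\mu(dy)$, and $\langle\mu,\nu\rangle_{\mathscr{W}}=\int_X Z\mu\,d\nu$. $X$ is of negative type if $(X,\sqrt d)$ embeds isometrically into a Hilbert space; in that case $\langle\cdot,\cdot\rangle_{\mathscr{W}}$ is an inner product on $\mathscr{M}(X)$ with norm $\|\cdot\|_{\mathscr{W}}$. The magnitude is $|X| = \sup\{1/\|\mu\|_{\mathscr{W}}^2 : \mu\in\mathscr{M}(X),\ \mu(X)=1\}\in(0,\infty]$. $X$ is called weighted if this supremum is attained; a measure $w$ with $Zw\equiv 1$ is called a weight of $X$. *)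

theory Defs
  imports "HOL-Analysis.Analysis"
begin

text \<open>A finite signed Borel measure on X is represented by a pair (P, N) of finite
  Borel measures on X (Jordan-type decomposition); the signed measure is P - N.
  All quantities below depend only on the difference P - N.\<close>

definition fsm :: "'a::metric_space set \<Rightarrow> 'a measure \<times> 'a measure \<Rightarrow> bool" where
  "fsm X \<mu> \<longleftrightarrow>
     sets (fst \<mu>) = sets (restrict_space borel X) \<and> finite_measure (fst \<mu>) \<and>
     sets (snd \<mu>) = sets (restrict_space borel X) \<and> finite_measure (snd \<mu>)"

definition smeas :: "'a measure \<times> 'a measure \<Rightarrow> 'a set \<Rightarrow> real" where
  "smeas \<mu> A = measure (fst \<mu>) A - measure (snd \<mu>) A"

definition sint :: "'a measure \<times> 'a measure \<Rightarrow> ('a \<Rightarrow> real) \<Rightarrow> real" where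
  "sint \<mu> f = integral\<^sup>L (fst \<mu>) f - integral\<^sup>L (snd \<mu>) f"

definition Zop :: "'a::metric_space measure \<times> 'a measure \<Rightarrow> 'a \<Rightarrow> real" where
  "Zop \<mu> x = sint \<mu> (\<lambda>y. exp (- dist x y))"

definition winner :: "'a::metric_space measure \<times> 'a measure \<Rightarrow> 'a measure \<times> 'a measure \<Rightarrow> real" where
  "winner \<mu> \<nu> = sint \<nu> (Zop \<mu>)"

definition magnitude :: "'a::metric_space set \<Rightarrow> ereal" where
  "magnitude X = (SUP \<mu>\<in>{\<mu>. fsm X \<mu> \<and> smeas \<mu> X = 1}. ereal (1 / winner \<mu> \<mu>))"

definition attains_magnitude :: "'a::metric_space set \<Rightarrow> 'a measure \<times> 'a measure \<Rightarrow> bool" where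
  "attains_magnitude X \<mu> \<longleftrightarrow> fsm X \<mu> \<and> smeas \<mu> X = 1 \<and> magnitude X = ereal (1 / winner \<mu> \<mu>)"

definition weighted :: "'a::metric_space set \<Rightarrow> bool" where
  "weighted X \<longleftrightarrow> (\<exists>\<mu>. attains_magnitude X \<mu>)"

definition is_weight :: "'a::metric_space set \<Rightarrow> 'a measure \<times> 'a measure \<Rightarrow> bool" where
  "is_weight X w \<longleftrightarrow> fsm X w \<and> (\<forall>x\<in>X. Zop w x = 1)"

end

theory Submission
  imports Defs "HOL-Probability.Giry_Monad"
begin

text \<open>
  Since \<open>exp (- dist x y) = exp (- \<parallel>\<phi> x - \<phi> y\<parallel>\<^sup>2)\<close> and the Gaussian kernel of a real inner
  product space is positive semidefinite (expand \<open>exp (2 \<langle>u, v\<rangle>)\<close> into its power series and apply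
  Schur's product theorem to the powers of the Gram matrix), the form \<open>winner\<close> is symmetric and
  positive semidefinite: both properties pass from finite sums to signed measures by discretising
  along finer and finer Borel partitions of the compact space \<open>X\<close>. The form is even definite. If
  \<open>winner \<mu> \<mu> = 0\<close>, the Cauchy-Schwarz inequality for the Gaussian kernel with one extra centre
  \<open>v\<close> anywhere in the Hilbert space shows that \<open>\<mu>\<close> integrates every Gaussian
  \<open>exp (- \<parallel>\<phi> x - v\<parallel>\<^sup>2)\<close> to 0. Up to the positive factor \<open>exp (- \<parallel>\<phi> x\<parallel>\<^sup>2)\<close>, these Gaussians span a
  point-separating algebra of continuous functions, so by Stone-Weierstrass \<open>\<mu>\<close> integrates every
  continuous function to 0 and hence vanishes.

  The magnitude is therefore the reciprocal of the minimum of the positive definite quadratic form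
  \<open>winner \<mu> \<mu>\<close> on the affine hyperplane \<open>\<mu> X = 1\<close>. At a minimiser \<open>\<mu>\<close> the derivative in each
  direction \<open>\<delta>\<^sub>x - \<mu>\<close> vanishes, i.e. \<open>Z\<mu> x = winner \<mu> \<mu>\<close> on \<open>X\<close>, so \<open>\<mu> / winner \<mu> \<mu>\<close> is a weight.
  Conversely, if \<open>Zw = 1\<close> on \<open>X\<close> then \<open>winner w \<nu> = \<nu> X\<close>, and for \<open>\<nu> X = 1\<close> the identity
  \<open>winner (\<nu> - w / w X) (\<nu> - w / w X) = winner \<nu> \<nu> - 1 / w X\<close> shows that the minimum \<open>1 / w X\<close>
  is attained exactly at \<open>\<nu> = w / w X\<close>.
\<close>

section \<open>Positive semidefiniteness of the Gaussian kernel\<close>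

lemma inner_residual_orthonormal:
  fixes E :: "'h::real_inner set"
  assumes "finite E" "\<forall>e\<in>E. \<forall>e'\<in>E. inner e e' = (if e = e' then 1 else 0)" "e' \<in> E"
  shows "inner (a - (\<Sum>e\<in>E. inner a e *\<^sub>R e)) e' = 0"
proof -
  have "inner (\<Sum>e\<in>E. inner a e *\<^sub>R e) e' = (\<Sum>e\<in>E. inner a e * inner e e')"
    by (simp add: inner_sum_left)
  also have "\<dots> = (\<Sum>e\<in>E. if e = e' then inner a e' else 0)"
    using assms(2,3) by (intro sum.cong) auto
  also have "\<dots> = inner a e'" using assms(1,3) by simp
  finally show ?thesis by (simp add: inner_diff_left)
qed

lemma orthonormal_expansion_finite:
  fixes S :: "'h::real_inner set"
  assumes "finite S"
  shows "\<exists>E. finite E \<and> (\<forall>e\<in>E. \<forall>e'\<in>E. inner e e' = (if e = e' then 1 else 0)) \<and>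
             (\<forall>u\<in>S. u = (\<Sum>e\<in>E. inner u e *\<^sub>R e))"
  using assms
proof (induction S)
  case empty
  then show ?case by (intro exI[of _ "{}"]) auto
next
  case (insert a S)
  then obtain E where E: "finite E" "\<forall>e\<in>E. \<forall>e'\<in>E. inner e e' = (if e = e' then 1 else 0)"
     "\<forall>u\<in>S. u = (\<Sum>e\<in>E. inner u e *\<^sub>R e)"
    by blast
  define r where "r = a - (\<Sum>e\<in>E. inner a e *\<^sub>R e)"
  have r_orth: "inner r e' = 0" if "e' \<in> E" for e'
    unfolding r_def using E(1,2) that by (rule inner_residual_orthonormal)
  show ?case
  proof (cases "r = 0")
    case True
    then show ?thesis using E by (intro exI[of _ E]) (auto simp: r_def)
  next
    case False
    define n where "n = r /\<^sub>R norm r"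
    have nn: "inner n n = 1" using False
      by (simp add: n_def inner_commute power2_norm_eq_inner[symmetric] power2_eq_square)
    have ne: "inner n e = 0" if "e \<in> E" for e
      using r_orth[OF that] by (simp add: n_def)
    have n_notin: "n \<notin> E" using ne nn by force
    have span_orth: "inner (\<Sum>e\<in>E. f e *\<^sub>R e) n = 0" for f
      using ne by (simp add: inner_commute[of _ n] inner_sum_right)
    have un: "inner u n = 0" if "u \<in> S" for u
      using E(3) that span_orth by metis
    have an: "inner a n *\<^sub>R n = r"
    proof -
      have "inner a n = inner r n + inner (\<Sum>e\<in>E. inner a e *\<^sub>R e) n"
        by (simp add: r_def inner_diff_left)
      also have "\<dots> = norm r" using False span_orth
        by (simp add: n_def power2_norm_eq_inner[symmetric] power2_eq_square)
      finally show ?thesis using False by (simp add: n_def)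
    qed
    show ?thesis
    proof (intro exI[of _ "insert n E"] conjI)
      show "finite (insert n E)" using E(1) by simp
      show "\<forall>e\<in>insert n E. \<forall>e'\<in>insert n E. inner e e' = (if e = e' then 1 else 0)"
        using E(2) nn ne by (auto simp: inner_commute)
      show "\<forall>u\<in>insert a S. u = (\<Sum>e\<in>insert n E. inner u e *\<^sub>R e)"
        using E(1,3) n_notin an un by (auto simp: r_def)
    qed
  qed
qed

lemma inner_eq_sum_finite_expansion:
  fixes S :: "'h::real_inner set"
  assumes "finite S"
  obtains E where "finite E" "\<And>u v. u \<in> S \<Longrightarrow> inner u v = (\<Sum>e\<in>E. inner u e * inner v e)"
proof -
  obtain E where E: "finite E" "\<forall>u\<in>S. u = (\<Sum>e\<in>E. inner u e *\<^sub>R e)"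
    using orthonormal_expansion_finite[OF assms] by blast
  have "inner u v = (\<Sum>e\<in>E. inner u e * inner v e)" if "u \<in> S" for u v
  proof -
    have "inner u v = inner (\<Sum>e\<in>E. inner u e *\<^sub>R e) v" using E(2) that by metis
    also have "\<dots> = (\<Sum>e\<in>E. inner u e * inner e v)" by (simp add: inner_sum_left)
    finally show ?thesis by (simp add: inner_commute)
  qed
  with E(1) that show ?thesis by blast
qed

lemma inner_power_kernel_psd:
  fixes u :: "'i \<Rightarrow> 'h::real_inner"
  assumes "finite I"
  shows "0 \<le> (\<Sum>i\<in>I. \<Sum>j\<in>I. a i * a j * inner (u i) (u j) ^ n)"
proof (induction n arbitrary: a)
  case 0
  have "(\<Sum>i\<in>I. \<Sum>j\<in>I. a i * a j) = (\<Sum>i\<in>I. a i)\<^sup>2"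
    by (simp add: sum_product power2_eq_square)
  then show ?case by simp
next
  case (Suc n)
  \<comment> \<open>Expanding one factor in an orthonormal basis writes the form as a sum of forms of power \<open>n\<close>.\<close>
  obtain E where E: "finite E" "\<And>x v. x \<in> u ` I \<Longrightarrow> inner x v = (\<Sum>e\<in>E. inner x e * inner v e)"
    using inner_eq_sum_finite_expansion[of "u ` I"] assms by blast
  have "(\<Sum>i\<in>I. \<Sum>j\<in>I. a i * a j * inner (u i) (u j) ^ Suc n)
      = (\<Sum>i\<in>I. \<Sum>j\<in>I. \<Sum>e\<in>E. (a i * inner (u i) e) * (a j * inner (u j) e) * inner (u i) (u j) ^ n)"
  proof (intro sum.cong refl)
    fix i j assume "i \<in> I" "j \<in> I"
    then have "inner (u i) (u j) = (\<Sum>e\<in>E. inner (u i) e * inner (u j) e)" using E(2) by blast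
    then have "a i * a j * inner (u i) (u j) ^ Suc n
        = a i * a j * inner (u i) (u j) ^ n * (\<Sum>e\<in>E. inner (u i) e * inner (u j) e)"
      by (metis mult.commute mult.left_commute power_Suc)
    then show "a i * a j * inner (u i) (u j) ^ Suc n
        = (\<Sum>e\<in>E. (a i * inner (u i) e) * (a j * inner (u j) e) * inner (u i) (u j) ^ n)"
      by (simp add: sum_distrib_left algebra_simps)
  qed
  also have "\<dots> = (\<Sum>e\<in>E. \<Sum>i\<in>I. \<Sum>j\<in>I. (a i * inner (u i) e) * (a j * inner (u j) e) * inner (u i) (u j) ^ n)"
    by (simp add: sum.swap[of _ E] sum.swap[of _ E I])
  also have "\<dots> \<ge> 0"
    by (intro sum_nonneg Suc.IH)
  finally show ?case .
qed

lemma gaussian_kernel_psd: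
  fixes u :: "'i \<Rightarrow> 'h::real_inner"
  assumes "finite I"
  shows "0 \<le> (\<Sum>i\<in>I. \<Sum>j\<in>I. a i * a j * exp (- (norm (u i - u j))\<^sup>2))"
proof -
  define b where "b i = a i * exp (- (norm (u i))\<^sup>2)" for i
  have gauss_eq: "a i * a j * exp (- (norm (u i - u j))\<^sup>2) = b i * b j * exp (2 * inner (u i) (u j))" for i j
  proof -
    have "(norm (u i - u j))\<^sup>2 = (norm (u i))\<^sup>2 + (norm (u j))\<^sup>2 - 2 * inner (u i) (u j)"
      by (simp add: power2_norm_eq_inner inner_diff_left inner_diff_right inner_commute)
    then have "exp (- (norm (u i - u j))\<^sup>2)
        = exp (- (norm (u i))\<^sup>2) * exp (- (norm (u j))\<^sup>2) * exp (2 * inner (u i) (u j))"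
      by (simp add: exp_add[symmetric] exp_diff)
    then show ?thesis by (simp add: b_def)
  qed
  have series: "(\<lambda>n. \<Sum>i\<in>I. \<Sum>j\<in>I. b i * b j * ((2 * inner (u i) (u j)) ^ n /\<^sub>R fact n))
        sums (\<Sum>i\<in>I. \<Sum>j\<in>I. b i * b j * exp (2 * inner (u i) (u j)))"
    by (intro sums_sum sums_mult exp_converges)
  have "0 \<le> (\<Sum>i\<in>I. \<Sum>j\<in>I. b i * b j * ((2 * inner (u i) (u j)) ^ n /\<^sub>R fact n))" for n
  proof -
    have "(\<Sum>i\<in>I. \<Sum>j\<in>I. b i * b j * ((2 * inner (u i) (u j)) ^ n /\<^sub>R fact n))
       = (2 ^ n / fact n) * (\<Sum>i\<in>I. \<Sum>j\<in>I. b i * b j * inner (u i) (u j) ^ n)"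
      by (simp add: sum_distrib_left power_mult_distrib divide_inverse algebra_simps)
    then show ?thesis using inner_power_kernel_psd[OF assms, of b u n] by simp
  qed
  then have "0 \<le> (\<Sum>i\<in>I. \<Sum>j\<in>I. b i * b j * exp (2 * inner (u i) (u j)))"
    using sums_le[OF _ sums_zero series] by simp
  then show ?thesis by (simp add: gauss_eq)
qed

lemma quadratic_nonneg_imp_discriminant_le:
  fixes A B C :: real
  assumes "\<And>t. 0 \<le> A + 2 * t * B + t\<^sup>2 * C" "0 \<le> C"
  shows "B\<^sup>2 \<le> A * C"
proof (cases "C = 0")
  case True
  have "B = 0"
  proof (rule ccontr)
    assume "B \<noteq> 0"
    have "0 \<le> A + 2 * (- (A + 1) / (2 * B)) * B" using assms(1)[of "- (A + 1) / (2 * B)"] True by simp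
    also have "\<dots> = -1" using \<open>B \<noteq> 0\<close> by (simp add: field_simps)
    finally show False by simp
  qed
  then show ?thesis using True by simp
next
  case False
  then have C: "C > 0" using assms(2) by simp
  have "0 \<le> A + 2 * (- B / C) * B + (- B / C)\<^sup>2 * C" by (rule assms(1))
  also have "\<dots> = A - B\<^sup>2 / C" using C by (simp add: field_simps power2_eq_square)
  finally show ?thesis using C by (simp add: field_simps)
qed

lemma gaussian_kernel_cauchy_schwarz:
  fixes u :: "nat \<Rightarrow> 'h::real_inner"
  shows "(\<Sum>i<m. b i * exp (- (norm (u i - v))\<^sup>2))\<^sup>2
         \<le> (\<Sum>i<m. \<Sum>j<m. b i * b j * exp (- (norm (u i - u j))\<^sup>2))"
proof -
  define A where "A = (\<Sum>i<m. \<Sum>j<m. b i * b j * exp (- (norm (u i - u j))\<^sup>2))"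
  define B where "B = (\<Sum>i<m. b i * exp (- (norm (u i - v))\<^sup>2))"
  have "0 \<le> A + 2 * t * B + t\<^sup>2 * 1" for t
  proof -
    define u' where "u' i = (if i < m then u i else v)" for i
    define b' where "b' i = (if i < m then b i else t)" for i
    have "0 \<le> (\<Sum>i\<in>insert m {..<m}. \<Sum>j\<in>insert m {..<m}. b' i * b' j * exp (- (norm (u' i - u' j))\<^sup>2))"
      by (rule gaussian_kernel_psd) simp
    also have "\<dots> = A + 2 * t * B + t\<^sup>2"
      by (simp add: A_def B_def u'_def b'_def sum.distrib sum_distrib_left norm_minus_commute
                    power2_eq_square algebra_simps)
    finally show ?thesis by simp
  qed
  then have "B\<^sup>2 \<le> A * 1" by (intro quadratic_nonneg_imp_discriminant_le) auto
  then show ?thesis by (simp add: A_def B_def)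
qed

definition lincomb_measure :: "real \<Rightarrow> 'a measure \<Rightarrow> real \<Rightarrow> 'a measure \<Rightarrow> 'a measure" where
  "lincomb_measure a M b N =
     measure_of (space M) (sets M) (\<lambda>A. ennreal a * emeasure M A + ennreal b * emeasure N A)"

lemma sets_lincomb_measure [simp, measurable_cong]: "sets (lincomb_measure a M b N) = sets M"
  by (simp add: lincomb_measure_def sets.sets_measure_of_eq)

lemma space_lincomb_measure [simp]: "space (lincomb_measure a M b N) = space M"
  by (simp add: lincomb_measure_def sets.space_measure_of_eq)

lemma emeasure_lincomb_measure:
  assumes "sets N = sets M" "A \<in> sets M"
  shows "emeasure (lincomb_measure a M b N) A = ennreal a * emeasure M A + ennreal b * emeasure N A"
  unfolding lincomb_measure_def
proof (rule emeasure_measure_of_sigma)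
  show "sigma_algebra (space M) (sets M)" by (rule sets.sigma_algebra_axioms)
  show "positive (sets M) (\<lambda>A. ennreal a * emeasure M A + ennreal b * emeasure N A)"
    by (simp add: positive_def)
  show "countably_additive (sets M) (\<lambda>A. ennreal a * emeasure M A + ennreal b * emeasure N A)"
    unfolding countably_additive_def
  proof (intro allI impI)
    fix F :: "nat \<Rightarrow> _" assume F: "range F \<subseteq> sets M" "disjoint_family F"
    have FN: "range F \<subseteq> sets N" using F assms by simp
    have "(\<Sum>i. ennreal a * emeasure M (F i) + ennreal b * emeasure N (F i))
        = (\<Sum>i. ennreal a * emeasure M (F i)) + (\<Sum>i. ennreal b * emeasure N (F i))"
      by (rule suminf_add[symmetric]) auto
    also have "\<dots> = ennreal a * emeasure M (\<Union>i. F i) + ennreal b * emeasure N (\<Union>i. F i)"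
      using suminf_emeasure[OF F] suminf_emeasure[OF FN F(2)] by simp
    finally show "(\<Sum>i. ennreal a * emeasure M (F i) + ennreal b * emeasure N (F i))
        = ennreal a * emeasure M (\<Union>i. F i) + ennreal b * emeasure N (\<Union>i. F i)" .
  qed
qed fact

lemma nn_integral_lincomb_measure:
  assumes sN: "sets N = sets M" and f: "f \<in> borel_measurable M"
  shows "(\<integral>\<^sup>+x. f x \<partial>lincomb_measure a M b N) = ennreal a * (\<integral>\<^sup>+x. f x \<partial>M) + ennreal b * (\<integral>\<^sup>+x. f x \<partial>N)"
  using f
proof (induction rule: borel_measurable_induct)
  case (cong f g)
  have "space N = space M" using sets_eq_imp_space_eq[OF sN] .
  with cong show ?case by (metis nn_integral_cong space_lincomb_measure)
next
  case (set A)
  then show ?case using sN by (simp add: emeasure_lincomb_measure)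
next
  case (mult u c)
  have "u \<in> borel_measurable (lincomb_measure a M b N)" "u \<in> borel_measurable N"
    using mult(2) sN by (simp_all cong: measurable_cong_sets)
  with mult show ?case by (simp add: nn_integral_cmult distrib_left mult_ac)
next
  case (add u v)
  have "u \<in> borel_measurable (lincomb_measure a M b N)" "v \<in> borel_measurable (lincomb_measure a M b N)"
    "u \<in> borel_measurable N" "v \<in> borel_measurable N"
    using add sN by (simp_all cong: measurable_cong_sets)
  with add show ?case by (simp add: nn_integral_add distrib_left algebra_simps)
next
  case (seq U)
  have inc: "incseq U" using seq by blast
  have mA: "U i \<in> borel_measurable (lincomb_measure a M b N)" and mN: "U i \<in> borel_measurable N" for i
    using seq(1) sN by (simp_all cong: measurable_cong_sets)
  have "(\<integral>\<^sup>+x. (SUP i. U i) x \<partial>lincomb_measure a M b N) = (SUP i. (\<integral>\<^sup>+x. U i x \<partial>lincomb_measure a M b N))"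
    unfolding SUP_apply by (rule nn_integral_monotone_convergence_SUP[OF inc mA])
  also have "\<dots> = (SUP i. ennreal a * (\<integral>\<^sup>+x. U i x \<partial>M) + ennreal b * (\<integral>\<^sup>+x. U i x \<partial>N))"
    using seq by simp
  also have "\<dots> = (SUP i. ennreal a * (\<integral>\<^sup>+x. U i x \<partial>M)) + (SUP i. ennreal b * (\<integral>\<^sup>+x. U i x \<partial>N))"
    using incseq_nn_integral[OF inc, of M] incseq_nn_integral[OF inc, of N]
    by (intro ennreal_SUP_add) (auto simp: incseq_def intro: mult_left_mono)
  also have "\<dots> = ennreal a * (\<integral>\<^sup>+x. (SUP i. U i) x \<partial>M) + ennreal b * (\<integral>\<^sup>+x. (SUP i. U i) x \<partial>N)"
    unfolding SUP_apply
    by (simp add: SUP_mult_left_ennreal nn_integral_monotone_convergence_SUP[OF inc seq(1)]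
                  nn_integral_monotone_convergence_SUP[OF inc mN])
  finally show ?case .
qed

lemma enn2real_lincomb:
  assumes "p < \<infinity>" "q < \<infinity>" "(a::real) \<ge> 0" "(b::real) \<ge> 0"
  shows "enn2real (ennreal a * p + ennreal b * q) = a * enn2real p + b * enn2real q"
  using assms by (simp add: enn2real_plus ennreal_mult_less_top enn2real_mult)

lemma integral_lincomb_measure:
  fixes f :: "'a \<Rightarrow> real"
  assumes sN: "sets N = sets M" and a: "a \<ge> 0" and b: "b \<ge> 0"
    and iM: "integrable M f" and iN: "integrable N f"
  shows "integral\<^sup>L (lincomb_measure a M b N) f = a * integral\<^sup>L M f + b * integral\<^sup>L N f"
proof -
  have fM: "f \<in> borel_measurable M" using iM by auto
  have nn: "(\<integral>\<^sup>+x. g x \<partial>lincomb_measure a M b N) = ennreal a * (\<integral>\<^sup>+x. g x \<partial>M) + ennreal b * (\<integral>\<^sup>+x. g x \<partial>N)"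
    if "g \<in> borel_measurable M" for g :: "'a \<Rightarrow> real"
    by (rule nn_integral_lincomb_measure[OF sN]) (use that in auto)
  have finM: "(\<integral>\<^sup>+x. ennreal (norm (f x)) \<partial>M) < \<infinity>" and finN: "(\<integral>\<^sup>+x. ennreal (norm (f x)) \<partial>N) < \<infinity>"
    using iM iN by (simp_all add: integrable_iff_bounded)
  have iA: "integrable (lincomb_measure a M b N) f"
  proof (rule integrableI_bounded)
    show "f \<in> borel_measurable (lincomb_measure a M b N)" using fM by (simp cong: measurable_cong_sets)
    show "(\<integral>\<^sup>+x. ennreal (norm (f x)) \<partial>lincomb_measure a M b N) < \<infinity>"
      using finM finN fM by (simp add: nn ennreal_mult_less_top)
  qed
  have le: "(\<integral>\<^sup>+x. ennreal (g x) \<partial>K) \<le> (\<integral>\<^sup>+x. ennreal (norm (f x)) \<partial>K)" if "g = f \<or> g = (\<lambda>x. - f x)" for g K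
    using that by (auto intro!: nn_integral_mono ennreal_leI)
  define pM where "pM = (\<integral>\<^sup>+x. ennreal (f x) \<partial>M)"
  define qM where "qM = (\<integral>\<^sup>+x. ennreal (- f x) \<partial>M)"
  define pN where "pN = (\<integral>\<^sup>+x. ennreal (f x) \<partial>N)"
  define qN where "qN = (\<integral>\<^sup>+x. ennreal (- f x) \<partial>N)"
  have fin: "pM < \<infinity>" "qM < \<infinity>" "pN < \<infinity>" "qN < \<infinity>"
    using le[of f M] le[of "\<lambda>x. - f x" M] le[of f N] le[of "\<lambda>x. - f x" N] finM finN
    unfolding pM_def qM_def pN_def qN_def by (auto dest: le_less_trans)
  have "integral\<^sup>L (lincomb_measure a M b N) f
      = enn2real (ennreal a * pM + ennreal b * pN) - enn2real (ennreal a * qM + ennreal b * qN)"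
    unfolding real_lebesgue_integral_def[OF iA] pM_def qM_def pN_def qN_def
    using fM by (simp add: nn)
  also have "\<dots> = a * (enn2real pM - enn2real qM) + b * (enn2real pN - enn2real qN)"
    using enn2real_lincomb[OF fin(1) fin(3) a b] enn2real_lincomb[OF fin(2) fin(4) a b]
    by (simp add: algebra_simps)
  also have "\<dots> = a * integral\<^sup>L M f + b * integral\<^sup>L N f"
    unfolding real_lebesgue_integral_def[OF iM] real_lebesgue_integral_def[OF iN]
      pM_def qM_def pN_def qN_def ..
  finally show ?thesis .
qed

lemma finite_measure_lincomb_measure:
  assumes "sets N = sets M" "finite_measure M" "finite_measure N"
  shows "finite_measure (lincomb_measure a M b N)"
proof (rule finite_measureI)
  have "space N = space M" using sets_eq_imp_space_eq[OF assms(1)] .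
  then show "emeasure (lincomb_measure a M b N) (space (lincomb_measure a M b N)) \<noteq> \<infinity>"
    using assms by (simp add: emeasure_lincomb_measure finite_measure.emeasure_finite ennreal_mult_eq_top_iff)
qed

lemma measure_lincomb_measure:
  assumes "sets N = sets M" "finite_measure M" "finite_measure N" "A \<in> sets M" "a \<ge> 0" "b \<ge> 0"
  shows "measure (lincomb_measure a M b N) A = a * measure M A + b * measure N A"
proof -
  have "emeasure M A < \<infinity>" "emeasure N A < \<infinity>"
    using finite_measure.emeasure_finite[OF assms(2), of A] finite_measure.emeasure_finite[OF assms(3), of A]
    by (simp_all add: less_top)
  then show ?thesis using assms
    by (simp add: measure_def emeasure_lincomb_measure enn2real_lincomb)
qed

section \<open>Signed measures as pairs of finite measures\<close>

lemma fsmD: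
  assumes "fsm X \<mu>"
  shows "sets (fst \<mu>) = sets (restrict_space borel X)" "sets (snd \<mu>) = sets (restrict_space borel X)"
    and "space (fst \<mu>) = X" "space (snd \<mu>) = X"
    and "finite_measure (fst \<mu>)" "finite_measure (snd \<mu>)"
  using assms sets_eq_imp_space_eq[of "fst \<mu>" "restrict_space borel X"]
    sets_eq_imp_space_eq[of "snd \<mu>" "restrict_space borel X"]
  by (auto simp: fsm_def space_restrict_space)

lemma
  assumes sets_M: "sets M = sets (restrict_space borel X)" and fin: "finite_measure M"
    and f: "f \<in> borel_measurable (restrict_space borel X)" and bound: "\<And>x. x \<in> X \<Longrightarrow> \<bar>f x\<bar> \<le> B"
  shows integrable_bounded_on: "integrable M f"
    and abs_integral_le_bound_on: "\<bar>integral\<^sup>L M f\<bar> \<le> B * measure M (space M)"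
proof -
  have space_M: "space M = X"
    using sets_eq_imp_space_eq[OF sets_M] by (simp add: space_restrict_space)
  have f_M: "f \<in> borel_measurable M" using f sets_M by (simp cong: measurable_cong_sets)
  show int: "integrable M f"
    using bound space_M by (intro finite_measure.integrable_const_bound[OF fin _ f_M, of B]) auto
  have "\<bar>integral\<^sup>L M f\<bar> \<le> integral\<^sup>L M (\<lambda>x. \<bar>f x\<bar>)"
    using integral_norm_bound[of M f] by simp
  also have "\<dots> \<le> integral\<^sup>L M (\<lambda>x. B)"
    using int bound space_M fin by (intro integral_mono) (auto intro: finite_measure.integrable_const)
  finally show "\<bar>integral\<^sup>L M f\<bar> \<le> B * measure M (space M)" by (simp add: mult.commute)
qed

definition sintegrable :: "'a measure \<times> 'a measure \<Rightarrow> ('a \<Rightarrow> real) \<Rightarrow> bool" where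
  "sintegrable \<mu> f \<longleftrightarrow> integrable (fst \<mu>) f \<and> integrable (snd \<mu>) f"

definition smass :: "'a measure \<times> 'a measure \<Rightarrow> real" where
  "smass \<mu> = measure (fst \<mu>) (space (fst \<mu>)) + measure (snd \<mu>) (space (snd \<mu>))"

lemma smass_nonneg: "0 \<le> smass \<mu>"
  by (simp add: smass_def)

lemma
  assumes \<mu>: "fsm X \<mu>"
    and f: "f \<in> borel_measurable (restrict_space borel X)" and bound: "\<And>x. x \<in> X \<Longrightarrow> \<bar>f x\<bar> \<le> B"
  shows sintegrable_bounded: "sintegrable \<mu> f"
    and abs_sint_le: "\<bar>sint \<mu> f\<bar> \<le> B * smass \<mu>"
proof -
  note bounded_on = integrable_bounded_on[OF _ _ f bound] abs_integral_le_bound_on[OF _ _ f bound]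
  show "sintegrable \<mu> f"
    using bounded_on(1) fsmD[OF \<mu>] by (simp add: sintegrable_def)
  have "\<bar>integral\<^sup>L (fst \<mu>) f\<bar> \<le> B * measure (fst \<mu>) (space (fst \<mu>))"
    using bounded_on(2)[OF fsmD(1,5)[OF \<mu>]] .
  moreover have "\<bar>integral\<^sup>L (snd \<mu>) f\<bar> \<le> B * measure (snd \<mu>) (space (snd \<mu>))"
    using bounded_on(2)[OF fsmD(2,6)[OF \<mu>]] .
  ultimately show "\<bar>sint \<mu> f\<bar> \<le> B * smass \<mu>"
    unfolding sint_def smass_def distrib_left by arith
qed

lemma sintegrable_continuous:
  assumes "compact X" "fsm X \<mu>" "continuous_on X f"
  shows "sintegrable \<mu> f"
proof -
  obtain B where "\<And>x. x \<in> X \<Longrightarrow> norm (f x) \<le> B"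
    using continuous_on_compact_bound[OF assms(1,3)] by blast
  then show ?thesis
    using assms(2,3) by (intro sintegrable_bounded borel_measurable_continuous_on_restrict) auto
qed

lemma sintegrable_cmult: "sintegrable \<mu> f \<Longrightarrow> sintegrable \<mu> (\<lambda>x. c * f x)"
  by (simp add: sintegrable_def)

lemma sintegrable_sum:
  "(\<And>i. i \<in> I \<Longrightarrow> sintegrable \<mu> (f i)) \<Longrightarrow> sintegrable \<mu> (\<lambda>x. \<Sum>i\<in>I. f i x)"
  by (simp add: sintegrable_def)

lemma sint_add:
  "sintegrable \<mu> f \<Longrightarrow> sintegrable \<mu> g \<Longrightarrow> sint \<mu> (\<lambda>x. f x + g x) = sint \<mu> f + sint \<mu> g"
  by (simp add: sintegrable_def sint_def)

lemma sint_diff: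
  "sintegrable \<mu> f \<Longrightarrow> sintegrable \<mu> g \<Longrightarrow> sint \<mu> (\<lambda>x. f x - g x) = sint \<mu> f - sint \<mu> g"
  by (simp add: sintegrable_def sint_def)

lemma sint_cmult: "sint \<mu> (\<lambda>x. c * f x) = c * sint \<mu> f"
  by (simp add: sint_def right_diff_distrib)

lemma sint_sum:
  "(\<And>i. i \<in> I \<Longrightarrow> sintegrable \<mu> (f i)) \<Longrightarrow> sint \<mu> (\<lambda>x. \<Sum>i\<in>I. f i x) = (\<Sum>i\<in>I. sint \<mu> (f i))"
  by (simp add: sintegrable_def sint_def sum_subtractf)

lemma sint_cong:
  assumes "fsm X \<mu>" "\<And>x. x \<in> X \<Longrightarrow> f x = g x"
  shows "sint \<mu> f = sint \<mu> g"
proof -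
  have "integral\<^sup>L (fst \<mu>) f = integral\<^sup>L (fst \<mu>) g" "integral\<^sup>L (snd \<mu>) f = integral\<^sup>L (snd \<mu>) g"
    using assms fsmD(3,4)[OF assms(1)] by (auto intro: Bochner_Integration.integral_cong)
  then show ?thesis by (simp add: sint_def)
qed

lemma sint_const: "fsm X \<mu> \<Longrightarrow> sint \<mu> (\<lambda>_. c) = c * smeas \<mu> X"
  by (simp add: fsmD(3,4) sint_def smeas_def algebra_simps)

lemma fst_eq_snd_iff_smeas_eq_0:
  assumes "fsm X \<mu>"
  shows "fst \<mu> = snd \<mu> \<longleftrightarrow> (\<forall>A\<in>sets (restrict_space borel X). smeas \<mu> A = 0)"
proof
  assume "\<forall>A\<in>sets (restrict_space borel X). smeas \<mu> A = 0"
  then show "fst \<mu> = snd \<mu>"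
    using fsmD[OF assms] by (intro measure_eqI) (auto simp: smeas_def finite_measure.emeasure_eq_measure)
qed (simp add: smeas_def)

definition sorient :: "real \<Rightarrow> 'a measure \<times> 'a measure \<Rightarrow> 'a measure \<times> 'a measure" where
  "sorient a \<mu> = (if 0 \<le> a then \<mu> else (snd \<mu>, fst \<mu>))"

lemma fsm_sorient: "fsm X \<mu> \<Longrightarrow> fsm X (sorient a \<mu>)"
  by (simp add: sorient_def fsm_def)

lemma sintegrable_sorient: "sintegrable \<mu> f \<Longrightarrow> sintegrable (sorient a \<mu>) f"
  by (simp add: sorient_def sintegrable_def)

lemma sint_sorient: "\<bar>a\<bar> * sint (sorient a \<mu>) f = a * sint \<mu> f"
  by (simp add: sorient_def sint_def algebra_simps)

lemma smeas_sorient: "\<bar>a\<bar> * smeas (sorient a \<mu>) A = a * smeas \<mu> A"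
  by (simp add: sorient_def smeas_def algebra_simps)

definition slincomb :: "real \<Rightarrow> 'a measure \<times> 'a measure \<Rightarrow> real \<Rightarrow> 'a measure \<times> 'a measure
    \<Rightarrow> 'a measure \<times> 'a measure" where
  "slincomb a \<mu> b \<nu> =
     (lincomb_measure \<bar>a\<bar> (fst (sorient a \<mu>)) \<bar>b\<bar> (fst (sorient b \<nu>)),
      lincomb_measure \<bar>a\<bar> (snd (sorient a \<mu>)) \<bar>b\<bar> (snd (sorient b \<nu>)))"

lemma fsm_slincomb:
  assumes "fsm X \<mu>" "fsm X \<nu>"
  shows "fsm X (slincomb a \<mu> b \<nu>)"
  using fsm_sorient[OF assms(1), of a] fsm_sorient[OF assms(2), of b]
  by (simp add: slincomb_def fsm_def finite_measure_lincomb_measure)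

lemma smeas_slincomb:
  assumes "fsm X \<mu>" "fsm X \<nu>" "A \<in> sets (restrict_space borel X)"
  shows "smeas (slincomb a \<mu> b \<nu>) A = a * smeas \<mu> A + b * smeas \<nu> A"
proof -
  have "smeas (slincomb a \<mu> b \<nu>) A = \<bar>a\<bar> * smeas (sorient a \<mu>) A + \<bar>b\<bar> * smeas (sorient b \<nu>) A"
    using fsm_sorient[OF assms(1), of a] fsm_sorient[OF assms(2), of b] assms(3)
    by (simp add: slincomb_def smeas_def fsm_def measure_lincomb_measure algebra_simps)
  then show ?thesis by (simp add: smeas_sorient)
qed

lemma sint_slincomb:
  assumes "fsm X \<mu>" "fsm X \<nu>" "sintegrable \<mu> f" "sintegrable \<nu> f"
  shows "sint (slincomb a \<mu> b \<nu>) f = a * sint \<mu> f + b * sint \<nu> f"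
proof -
  have "sint (slincomb a \<mu> b \<nu>) f = \<bar>a\<bar> * sint (sorient a \<mu>) f + \<bar>b\<bar> * sint (sorient b \<nu>) f"
    using sintegrable_sorient[OF assms(3), of a] sintegrable_sorient[OF assms(4), of b]
      fsmD(1,2)[OF assms(1)] fsmD(1,2)[OF assms(2)]
    by (simp add: slincomb_def sint_def sintegrable_def sorient_def integral_lincomb_measure algebra_simps)
  then show ?thesis by (simp add: sint_sorient)
qed

definition sdirac :: "'a::metric_space set \<Rightarrow> 'a \<Rightarrow> 'a measure \<times> 'a measure" where
  "sdirac X x = (return (restrict_space borel X) x, null_measure (restrict_space borel X))"

lemma fsm_sdirac: "x \<in> X \<Longrightarrow> fsm X (sdirac X x)"
proof -
  assume "x \<in> X"
  then have "prob_space (return (restrict_space borel X) x)"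
    by (intro prob_space_return) (simp add: space_restrict_space)
  then show ?thesis
    by (simp add: sdirac_def fsm_def prob_space.finite_measure finite_measureI)
qed

lemma sint_sdirac: "x \<in> X \<Longrightarrow> f \<in> borel_measurable (restrict_space borel X) \<Longrightarrow> sint (sdirac X x) f = f x"
  by (simp add: sdirac_def sint_def integral_return space_restrict_space)

lemma space_in_sets_restrict_borel: "X \<in> sets (restrict_space borel X)"
  using sets.top[of "restrict_space borel X"] by (simp add: space_restrict_space)

lemma smeas_sdirac_space: "x \<in> X \<Longrightarrow> smeas (sdirac X x) X = 1"
  using space_in_sets_restrict_borel[of X] by (simp add: sdirac_def smeas_def measure_return)

section \<open>The kernel and the bilinear form\<close>

lemma abs_exp_neg_diff_le:
  fixes s t :: real
  assumes "0 \<le> s" "0 \<le> t"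
  shows "\<bar>exp (- s) - exp (- t)\<bar> \<le> \<bar>s - t\<bar>"
proof -
  have ordered: "\<bar>exp (- s) - exp (- t)\<bar> \<le> \<bar>s - t\<bar>" if "0 \<le> s" "s \<le> t" for s t :: real
  proof -
    have "exp (- s) - exp (- t) = exp (- s) * (1 - exp (- (t - s)))"
      by (simp add: algebra_simps exp_diff[symmetric] exp_add[symmetric])
    moreover have "0 \<le> 1 - exp (- (t - s))" using that by simp
    moreover have "1 - exp (- (t - s)) \<le> t - s"
      using exp_ge_add_one_self[of "s - t"] by (simp add: algebra_simps)
    moreover have "exp (- s) \<le> 1" using that by simp
    ultimately show ?thesis
      using that mult_mono[of "exp (- s)" 1 "1 - exp (- (t - s))" "t - s"] by simp
  qed
  show ?thesis
    using ordered[of s t] ordered[of t s] assms by (cases "s \<le> t") (auto simp: abs_minus_commute)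
qed

lemma exp_neg_dist_lipschitz:
  "\<bar>exp (- dist x y) - exp (- dist x' y')\<bar> \<le> dist x x' + dist y y'"
proof -
  have "\<bar>exp (- dist x y) - exp (- dist x' y')\<bar> \<le> \<bar>dist x y - dist x' y'\<bar>"
    by (rule abs_exp_neg_diff_le) auto
  also have "\<dots> \<le> dist x x' + dist y y'"
    by (smt (verit, best) dist_commute dist_triangle)
  finally show ?thesis .
qed

lemma sintegrable_exp_neg_dist: "fsm X \<mu> \<Longrightarrow> sintegrable \<mu> (\<lambda>y. exp (- dist x y))"
  by (rule sintegrable_bounded[where B = 1])
    (auto intro!: borel_measurable_continuous_on_restrict continuous_intros)

lemma Zop_lipschitz:
  assumes "fsm X \<mu>"
  shows "\<bar>Zop \<mu> x - Zop \<mu> x'\<bar> \<le> dist x x' * smass \<mu>"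
proof -
  have "Zop \<mu> x - Zop \<mu> x' = sint \<mu> (\<lambda>y. exp (- dist x y) - exp (- dist x' y))"
    unfolding Zop_def using assms by (intro sint_diff[symmetric] sintegrable_exp_neg_dist)
  also have "\<bar>\<dots>\<bar> \<le> dist x x' * smass \<mu>"
  proof (rule abs_sint_le[OF assms])
    show "\<bar>exp (- dist x y) - exp (- dist x' y)\<bar> \<le> dist x x'" for y
      using exp_neg_dist_lipschitz[of x y x' y] by simp
  qed (intro borel_measurable_continuous_on_restrict continuous_intros)
  finally show ?thesis .
qed

lemma abs_Zop_le: "fsm X \<mu> \<Longrightarrow> \<bar>Zop \<mu> x\<bar> \<le> smass \<mu>"
  using abs_sint_le[of X \<mu> "\<lambda>y. exp (- dist x y)" 1]
  by (simp add: Zop_def borel_measurable_continuous_on_restrict continuous_intros)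

lemma continuous_on_Zop: "fsm X \<mu> \<Longrightarrow> continuous_on S (Zop \<mu>)"
  using Zop_lipschitz[of X \<mu>]
  by (intro lipschitz_on_continuous_on[of "smass \<mu>"] lipschitz_onI)
    (simp_all add: dist_real_def mult.commute smass_nonneg)

lemma sintegrable_Zop: "fsm X \<mu> \<Longrightarrow> fsm X \<nu> \<Longrightarrow> sintegrable \<nu> (Zop \<mu>)"
  by (intro sintegrable_bounded[where B = "smass \<mu>"] borel_measurable_continuous_on_restrict
      continuous_on_Zop abs_Zop_le)

lemma Zop_slincomb:
  "fsm X \<mu> \<Longrightarrow> fsm X \<nu> \<Longrightarrow> Zop (slincomb a \<mu> b \<nu>) x = a * Zop \<mu> x + b * Zop \<nu> x"
  by (simp add: Zop_def sint_slincomb sintegrable_exp_neg_dist)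

lemma winner_slincomb_left:
  assumes "fsm X \<mu>" "fsm X \<nu>" "fsm X \<rho>"
  shows "winner (slincomb a \<mu> b \<nu>) \<rho> = a * winner \<mu> \<rho> + b * winner \<nu> \<rho>"
proof -
  have "Zop (slincomb a \<mu> b \<nu>) = (\<lambda>x. a * Zop \<mu> x + b * Zop \<nu> x)"
    using assms by (simp add: fun_eq_iff Zop_slincomb)
  then have "winner (slincomb a \<mu> b \<nu>) \<rho> = sint \<rho> (\<lambda>x. a * Zop \<mu> x + b * Zop \<nu> x)"
    by (simp add: winner_def)
  also have "\<dots> = a * winner \<mu> \<rho> + b * winner \<nu> \<rho>"
    using assms
    by (subst sint_add) (auto simp: winner_def sint_cmult intro: sintegrable_cmult sintegrable_Zop)
  finally show ?thesis .
qed

lemma winner_slincomb_right: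
  "fsm X \<mu> \<Longrightarrow> fsm X \<nu> \<Longrightarrow> fsm X \<rho> \<Longrightarrow>
    winner \<rho> (slincomb a \<mu> b \<nu>) = a * winner \<rho> \<mu> + b * winner \<rho> \<nu>"
  by (simp add: winner_def sint_slincomb sintegrable_Zop)

lemma winner_sdirac_right: "fsm X \<mu> \<Longrightarrow> x \<in> X \<Longrightarrow> winner \<mu> (sdirac X x) = Zop \<mu> x"
  by (simp add: winner_def sint_sdirac borel_measurable_continuous_on_restrict continuous_on_Zop)

section \<open>Discretisation along fine partitions\<close>

lemma le_if_le_add_mult_all_pos:
  fixes x y K :: real
  assumes "\<And>r. 0 < r \<Longrightarrow> x \<le> y + r * K"
  shows "x \<le> y"
proof (cases "K \<le> 0")
  case True
  have "x \<le> y + 1 * K" by (rule assms) simp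
  with True show ?thesis by linarith
next
  case False
  show ?thesis
  proof (rule field_le_epsilon)
    fix e :: real assume "0 < e"
    with False have "x \<le> y + e / K * K" by (intro assms) simp
    with False show "x \<le> y + e" by simp
  qed
qed

definition fine_partition :: "'a::metric_space set \<Rightarrow> real \<Rightarrow> nat \<Rightarrow> (nat \<Rightarrow> 'a) \<Rightarrow> (nat \<Rightarrow> 'a set) \<Rightarrow> bool" where
  "fine_partition X r m c A \<longleftrightarrow> disjoint_family_on A {..<m} \<and> (\<Union>i<m. A i) = X \<and>
     (\<forall>i<m. c i \<in> X \<and> A i \<in> sets (restrict_space borel X) \<and> A i \<subseteq> ball (c i) r)"

lemma fine_partition_exists:
  assumes "compact X" "r > 0"
  obtains m c A where "fine_partition X r m c A"
proof -
  have cover: "X \<subseteq> (\<Union>x\<in>X. ball x r)" using assms(2) by auto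
  have "\<exists>F. F \<subseteq> X \<and> finite F \<and> X \<subseteq> (\<Union>x\<in>F. ball x r)"
    by (rule compactE_image[OF assms(1) _ cover]) auto
  then obtain F where F: "F \<subseteq> X" "finite F" "X \<subseteq> (\<Union>x\<in>F. ball x r)" by blast
  obtain l where l: "set l = F" using finite_list[OF F(2)] by blast
  define m where "m = length l"
  define c where "c i = l ! i" for i
  define B where "B i = X \<inter> ball (c i) r" for i
  have c_X: "c i \<in> X" if "i < m" for i using that F(1) l unfolding c_def m_def by auto
  have "range B \<subseteq> sets (restrict_space borel X)"
    unfolding B_def sets_restrict_space by (intro image_subsetI imageI) simp
  then have "disjointed B i \<in> sets (restrict_space borel X)" for i
    using sets.range_disjointed_sets by blast
  moreover have "disjointed B i \<subseteq> ball (c i) r" for i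
    using disjointed_subset[of B i] by (auto simp: B_def)
  moreover have "disjoint_family_on (disjointed B) {..<m}"
    using disjoint_family_disjointed by (rule disjoint_family_on_mono[rotated]) simp
  moreover have "(\<Union>i<m. disjointed B i) = X"
  proof -
    have "X \<subseteq> (\<Union>i<m. ball (c i) r)"
    proof
      fix x assume "x \<in> X"
      then obtain y where y: "y \<in> F" "x \<in> ball y r" using F(3) by blast
      then obtain i where "i < m" "y = c i" using l by (auto simp: in_set_conv_nth c_def m_def)
      with y(2) show "x \<in> (\<Union>i<m. ball (c i) r)" by blast
    qed
    then have "(\<Union>i<m. B i) = X" by (auto simp: B_def)
    then show ?thesis using finite_UN_disjointed_eq[of B m] by (simp add: atLeast0LessThan)
  qed
  ultimately have "fine_partition X r m c (disjointed B)"
    using c_X by (simp add: fine_partition_def)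
  then show ?thesis by (rule that)
qed

lemma fine_partition_cell:
  assumes "fine_partition X r m c A" "x \<in> X"
  obtains i where "i < m" "x \<in> A i" "\<And>j. j < m \<Longrightarrow> x \<in> A j \<Longrightarrow> j = i"
  using assms unfolding fine_partition_def disjoint_family_on_def by blast

lemma fine_partition_dist: "fine_partition X r m c A \<Longrightarrow> i < m \<Longrightarrow> y \<in> A i \<Longrightarrow> dist (c i) y < r"
  unfolding fine_partition_def mem_ball[symmetric] by blast

lemma
  fixes y :: "nat \<Rightarrow> real"
  assumes fin: "finite_measure M" and A: "\<And>i. i < m \<Longrightarrow> A i \<in> sets M"
  shows integrable_step_function: "integrable M (\<lambda>x. \<Sum>i<m. indicator (A i) x * y i)"
    and integral_step_function: "integral\<^sup>L M (\<lambda>x. \<Sum>i<m. indicator (A i) x * y i) = (\<Sum>i<m. measure M (A i) * y i)"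
proof -
  have ind_int: "integrable M (\<lambda>x. indicator (A i) x * y i)" if "i < m" for i
    using A[OF that] fin
    by (intro integrable_mult_left integrable_real_indicator)
      (auto simp: finite_measure.emeasure_finite less_top[symmetric])
  then show "integrable M (\<lambda>x. \<Sum>i<m. indicator (A i) x * y i)"
    by (intro Bochner_Integration.integrable_sum) simp
  have "integral\<^sup>L M (\<lambda>x. \<Sum>i<m. indicator (A i) x * y i) = (\<Sum>i<m. integral\<^sup>L M (\<lambda>x. indicator (A i) x * y i))"
    by (intro Bochner_Integration.integral_sum ind_int) simp
  also have "\<dots> = (\<Sum>i<m. measure M (A i) * y i)"
  proof (intro sum.cong refl)
    fix i assume "i \<in> {..<m}"
    then have "A i \<inter> space M = A i" using A sets.sets_into_space by blast
    then show "integral\<^sup>L M (\<lambda>x. indicator (A i) x * y i) = measure M (A i) * y i"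
      by simp
  qed
  finally show "integral\<^sup>L M (\<lambda>x. \<Sum>i<m. indicator (A i) x * y i) = (\<Sum>i<m. measure M (A i) * y i)" .
qed

lemma integral_partition_approx:
  assumes p: "fine_partition X r m c A"
    and sets_M: "sets M = sets (restrict_space borel X)" and fin: "finite_measure M"
    and f: "f \<in> borel_measurable (restrict_space borel X)" and bound: "\<And>x. x \<in> X \<Longrightarrow> \<bar>f x\<bar> \<le> B"
    and osc: "\<And>i x. i < m \<Longrightarrow> x \<in> A i \<Longrightarrow> \<bar>f x - f (c i)\<bar> \<le> \<eta>"
  shows "\<bar>integral\<^sup>L M f - (\<Sum>i<m. measure M (A i) * f (c i))\<bar> \<le> \<eta> * measure M (space M)"
proof -
  have A_X: "A i \<in> sets (restrict_space borel X)" if "i < m" for i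
    using p that by (simp add: fine_partition_def)
  have A_M: "A i \<in> sets M" if "i < m" for i using A_X[OF that] sets_M by simp
  define s where "s x = (\<Sum>i<m. indicator (A i) x * f (c i))" for x
  have s_meas: "s \<in> borel_measurable (restrict_space borel X)"
    unfolding s_def using A_X
    by (intro borel_measurable_sum borel_measurable_times borel_measurable_indicator measurable_const) auto
  have "\<bar>f x - s x\<bar> \<le> \<eta>" if x: "x \<in> X" for x
  proof -
    obtain i where i: "i < m" "x \<in> A i" "\<And>j. j < m \<Longrightarrow> x \<in> A j \<Longrightarrow> j = i"
      using fine_partition_cell[OF p x] by blast
    have "s x = (\<Sum>j<m. if j = i then f (c i) else 0)"
      unfolding s_def
    proof (intro sum.cong refl)
      fix j assume j: "j \<in> {..<m}"
      show "indicator (A j) x * f (c j) = (if j = i then f (c i) else 0)"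
      proof (cases "j = i")
        case False
        then have "x \<notin> A j" using i(3) j by blast
        then show ?thesis using False by simp
      qed (use i(2) in simp)
    qed
    also have "\<dots> = f (c i)" using i(1) by simp
    finally show ?thesis using osc[OF i(1,2)] by simp
  qed
  then have "\<bar>integral\<^sup>L M (\<lambda>x. f x - s x)\<bar> \<le> \<eta> * measure M (space M)"
    using f s_meas by (intro abs_integral_le_bound_on[OF sets_M fin]) auto
  moreover have "integral\<^sup>L M (\<lambda>x. f x - s x) = integral\<^sup>L M f - integral\<^sup>L M s"
    unfolding s_def
    by (intro Bochner_Integration.integral_diff integrable_bounded_on[OF sets_M fin f bound]
        integrable_step_function[OF fin A_M])
  moreover have "integral\<^sup>L M s = (\<Sum>i<m. measure M (A i) * f (c i))"
    unfolding s_def by (rule integral_step_function[OF fin A_M])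
  ultimately show ?thesis by simp
qed

lemma sint_partition_approx:
  assumes \<mu>: "fsm X \<mu>" and p: "fine_partition X r m c A"
    and f: "f \<in> borel_measurable (restrict_space borel X)" and bound: "\<And>x. x \<in> X \<Longrightarrow> \<bar>f x\<bar> \<le> B"
    and osc: "\<And>i x. i < m \<Longrightarrow> x \<in> A i \<Longrightarrow> \<bar>f x - f (c i)\<bar> \<le> \<eta>"
  shows "\<bar>sint \<mu> f - (\<Sum>i<m. smeas \<mu> (A i) * f (c i))\<bar> \<le> \<eta> * smass \<mu>"
proof -
  note approx = integral_partition_approx[OF p _ _ f bound osc]
  have "sint \<mu> f - (\<Sum>i<m. smeas \<mu> (A i) * f (c i))
      = (integral\<^sup>L (fst \<mu>) f - (\<Sum>i<m. measure (fst \<mu>) (A i) * f (c i)))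
        - (integral\<^sup>L (snd \<mu>) f - (\<Sum>i<m. measure (snd \<mu>) (A i) * f (c i)))"
    by (simp add: sint_def smeas_def left_diff_distrib sum_subtractf)
  then show ?thesis
    using approx[OF fsmD(1,5)[OF \<mu>]] approx[OF fsmD(2,6)[OF \<mu>]]
    unfolding smass_def distrib_left by linarith
qed

lemma sint_partition_approx_continuous:
  assumes X: "compact X" and \<mu>: "fsm X \<mu>" and g: "continuous_on X g" and e: "0 < e"
  obtains \<delta> where "0 < \<delta>"
    "\<And>r m c A. fine_partition X r m c A \<Longrightarrow> r \<le> \<delta> \<Longrightarrow>
       \<bar>sint \<mu> g - (\<Sum>i<m. smeas \<mu> (A i) * g (c i))\<bar> \<le> e * smass \<mu>"
proof -
  obtain \<delta> where \<delta>: "0 < \<delta>" "\<forall>x\<in>X. \<forall>x'\<in>X. dist x' x < \<delta> \<longrightarrow> dist (g x') (g x) < e"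
    using compact_uniformly_continuous[OF g X] e unfolding uniformly_continuous_on_def by metis
  obtain B where B: "\<And>x. x \<in> X \<Longrightarrow> norm (g x) \<le> B"
    using continuous_on_compact_bound[OF X g] by blast
  have "\<bar>sint \<mu> g - (\<Sum>i<m. smeas \<mu> (A i) * g (c i))\<bar> \<le> e * smass \<mu>"
    if p: "fine_partition X r m c A" and r: "r \<le> \<delta>" for r m c A
  proof (rule sint_partition_approx[OF \<mu> p])
    show "g \<in> borel_measurable (restrict_space borel X)"
      by (rule borel_measurable_continuous_on_restrict[OF g])
    show "\<bar>g x\<bar> \<le> B" if "x \<in> X" for x using B[OF that] by simp
    show "\<bar>g y - g (c i)\<bar> \<le> e" if "i < m" "y \<in> A i" for i y
    proof -
      have "y \<in> X" "c i \<in> X" using p that by (auto simp: fine_partition_def)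
      moreover have "dist y (c i) < \<delta>"
        using fine_partition_dist[OF p that] r by (simp add: dist_commute)
      ultimately show ?thesis using \<delta>(2) by (force simp: dist_real_def)
    qed
  qed
  with \<delta>(1) show ?thesis by (rule that)
qed

lemma sum_abs_smeas_partition_le:
  assumes \<mu>: "fsm X \<mu>" and p: "fine_partition X r m c A"
  shows "(\<Sum>i<m. \<bar>smeas \<mu> (A i)\<bar>) \<le> smass \<mu>"
proof -
  have mass: "(\<Sum>i<m. measure M (A i)) = measure M (space M)"
    if sets_M: "sets M = sets (restrict_space borel X)" and fin: "finite_measure M" for M
  proof -
    have "(\<Sum>i<m. measure M (A i)) = measure M (\<Union>i<m. A i)"
      using p sets_M unfolding fine_partition_def
      by (intro finite_measure.finite_measure_finite_Union[OF fin, symmetric]) auto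
    also have "(\<Union>i<m. A i) = space M"
      using p sets_eq_imp_space_eq[OF sets_M] by (simp add: fine_partition_def space_restrict_space)
    finally show ?thesis .
  qed
  have "\<bar>smeas \<mu> (A i)\<bar> \<le> measure (fst \<mu>) (A i) + measure (snd \<mu>) (A i)" for i
    using measure_nonneg[of "fst \<mu>" "A i"] measure_nonneg[of "snd \<mu>" "A i"]
    unfolding smeas_def by linarith
  then have "(\<Sum>i<m. \<bar>smeas \<mu> (A i)\<bar>) \<le> (\<Sum>i<m. measure (fst \<mu>) (A i) + measure (snd \<mu>) (A i))"
    by (intro sum_mono)
  also have "\<dots> = smass \<mu>"
    using mass[OF fsmD(1,5)[OF \<mu>]] mass[OF fsmD(2,6)[OF \<mu>]] by (simp add: sum.distrib smass_def)
  finally show ?thesis .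
qed

definition discrete_winner ::
    "nat \<Rightarrow> (nat \<Rightarrow> 'a::metric_space) \<Rightarrow> (nat \<Rightarrow> 'a set) \<Rightarrow> 'a measure \<times> 'a measure \<Rightarrow> 'a measure \<times> 'a measure \<Rightarrow> real" where
  "discrete_winner m c A \<mu> \<nu> = (\<Sum>i<m. \<Sum>j<m. smeas \<mu> (A i) * smeas \<nu> (A j) * exp (- dist (c i) (c j)))"

lemma discrete_winner_commute: "discrete_winner m c A \<mu> \<nu> = discrete_winner m c A \<nu> \<mu>"
  unfolding discrete_winner_def by (subst sum.swap) (simp add: dist_commute mult_ac)

lemma exp_neg_dist_partition_osc:
  assumes "fine_partition X r m c A" "i < m" "y \<in> A i"
  shows "\<bar>exp (- dist x y) - exp (- dist x (c i))\<bar> \<le> r"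
  using exp_neg_dist_lipschitz[of x y x "c i"] fine_partition_dist[OF assms]
  by (simp add: dist_commute)

lemma Zop_partition_approx:
  assumes \<mu>: "fsm X \<mu>" and p: "fine_partition X r m c A"
  shows "\<bar>Zop \<mu> x - (\<Sum>j<m. smeas \<mu> (A j) * exp (- dist x (c j)))\<bar> \<le> r * smass \<mu>"
  unfolding Zop_def using exp_neg_dist_partition_osc[OF p]
  by (intro sint_partition_approx[OF \<mu> p, where B = 1] borel_measurable_continuous_on_restrict
      continuous_intros) auto

lemma winner_partition_approx_left:
  assumes \<mu>: "fsm X \<mu>" and \<nu>: "fsm X \<nu>" and p: "fine_partition X r m c A"
  shows "\<bar>winner \<mu> \<nu> - (\<Sum>j<m. smeas \<mu> (A j) * sint \<nu> (\<lambda>x. exp (- dist (c j) x)))\<bar>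
    \<le> r * smass \<mu> * smass \<nu>"
proof -
  define h where "h x = (\<Sum>j<m. smeas \<mu> (A j) * exp (- dist (c j) x))" for x
  have h_int: "sintegrable \<nu> h"
    unfolding h_def by (intro sintegrable_sum sintegrable_cmult sintegrable_exp_neg_dist[OF \<nu>])
  have "sint \<nu> h = (\<Sum>j<m. smeas \<mu> (A j) * sint \<nu> (\<lambda>x. exp (- dist (c j) x)))"
    unfolding h_def
    by (subst sint_sum) (auto simp: sint_cmult intro: sintegrable_cmult sintegrable_exp_neg_dist[OF \<nu>])
  moreover have "winner \<mu> \<nu> - sint \<nu> h = sint \<nu> (\<lambda>x. Zop \<mu> x - h x)"
    unfolding winner_def by (rule sint_diff[symmetric, OF sintegrable_Zop[OF \<mu> \<nu>] h_int])
  moreover have "\<bar>sint \<nu> (\<lambda>x. Zop \<mu> x - h x)\<bar> \<le> (r * smass \<mu>) * smass \<nu>"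
  proof (rule abs_sint_le[OF \<nu>])
    show "(\<lambda>x. Zop \<mu> x - h x) \<in> borel_measurable (restrict_space borel X)"
      unfolding h_def
      by (intro borel_measurable_continuous_on_restrict continuous_intros continuous_on_Zop[OF \<mu>])
    show "\<bar>Zop \<mu> x - h x\<bar> \<le> r * smass \<mu>" for x
      unfolding h_def using Zop_partition_approx[OF \<mu> p, of x] by (simp add: dist_commute)
  qed
  ultimately show ?thesis by simp
qed

lemma winner_discrete_approx:
  assumes \<mu>: "fsm X \<mu>" and \<nu>: "fsm X \<nu>" and p: "fine_partition X r m c A" and r: "0 \<le> r"
  shows "\<bar>winner \<mu> \<nu> - discrete_winner m c A \<mu> \<nu>\<bar> \<le> 2 * r * smass \<mu> * smass \<nu>"
proof -
  define S where "S j = sint \<nu> (\<lambda>x. exp (- dist (c j) x))" for j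
  have approx: "\<bar>S j - (\<Sum>i<m. smeas \<nu> (A i) * exp (- dist (c j) (c i)))\<bar> \<le> r * smass \<nu>" for j
    unfolding S_def using exp_neg_dist_partition_osc[OF p]
    by (intro sint_partition_approx[OF \<nu> p, where B = 1] borel_measurable_continuous_on_restrict
        continuous_intros) auto
  have "(\<Sum>j<m. smeas \<mu> (A j) * S j) - discrete_winner m c A \<mu> \<nu>
      = (\<Sum>j<m. smeas \<mu> (A j) * (S j - (\<Sum>i<m. smeas \<nu> (A i) * exp (- dist (c j) (c i)))))"
    unfolding discrete_winner_def
    by (simp add: sum_subtractf right_diff_distrib sum_distrib_left dist_commute mult_ac)
  also have "\<bar>\<dots>\<bar> \<le> (\<Sum>j<m. \<bar>smeas \<mu> (A j)\<bar> * (r * smass \<nu>))"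
    using approx by (intro order_trans[OF sum_abs] sum_mono) (simp add: abs_mult mult_left_mono)
  also have "\<dots> \<le> smass \<mu> * (r * smass \<nu>)"
    unfolding sum_distrib_right[symmetric] using r smass_nonneg[of \<nu>]
    by (intro mult_right_mono sum_abs_smeas_partition_le[OF \<mu> p]) auto
  finally show ?thesis
    using winner_partition_approx_left[OF \<mu> \<nu> p] unfolding S_def by (simp add: algebra_simps)
qed

lemma winner_commute:
  assumes X: "compact X" and \<mu>: "fsm X \<mu>" and \<nu>: "fsm X \<nu>"
  shows "winner \<mu> \<nu> = winner \<nu> \<mu>"
proof -
  have "\<bar>winner \<mu> \<nu> - winner \<nu> \<mu>\<bar> \<le> 0"
  proof (rule le_if_le_add_mult_all_pos)
    fix r :: real assume r: "0 < r"
    then obtain m c A where p: "fine_partition X r m c A" using fine_partition_exists[OF X] by blast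
    have "\<bar>winner \<mu> \<nu> - discrete_winner m c A \<mu> \<nu>\<bar> \<le> 2 * r * smass \<mu> * smass \<nu>"
      using winner_discrete_approx[OF \<mu> \<nu> p] r by simp
    moreover have "\<bar>winner \<nu> \<mu> - discrete_winner m c A \<mu> \<nu>\<bar> \<le> 2 * r * smass \<mu> * smass \<nu>"
      using winner_discrete_approx[OF \<nu> \<mu> p] r by (simp add: discrete_winner_commute mult_ac)
    ultimately show "\<bar>winner \<mu> \<nu> - winner \<nu> \<mu>\<bar> \<le> 0 + r * (4 * smass \<mu> * smass \<nu>)"
      by linarith
  qed
  then show ?thesis by simp
qed

lemma winner_slincomb_self:
  assumes X: "compact X" and \<mu>: "fsm X \<mu>" and \<nu>: "fsm X \<nu>"
  shows "winner (slincomb a \<mu> b \<nu>) (slincomb a \<mu> b \<nu>)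
    = a\<^sup>2 * winner \<mu> \<mu> + 2 * a * b * winner \<mu> \<nu> + b\<^sup>2 * winner \<nu> \<nu>"
  using winner_commute[OF X \<mu> \<nu>] \<mu> \<nu> fsm_slincomb[OF \<mu> \<nu>]
  by (simp add: winner_slincomb_left winner_slincomb_right power2_eq_square algebra_simps)

section \<open>Uniqueness of finite Borel measures\<close>

lemma tendsto_integral_closed_cutoff:
  assumes sets_M: "sets M = sets (restrict_space borel X)" and fin: "finite_measure M"
    and F: "closed F" "F \<noteq> {}"
  shows "(\<lambda>n. integral\<^sup>L M (\<lambda>x. max 0 (1 - real n * infdist x F))) \<longlonglongrightarrow> measure M (F \<inter> X)"
proof -
  have space_M: "space M = X"
    using sets_eq_imp_space_eq[OF sets_M] by (simp add: space_restrict_space)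
  have FX: "F \<inter> X \<in> sets M"
    using F(1) sets_M by (auto simp: sets_restrict_space)
  have pointwise: "(\<lambda>n. max 0 (1 - real n * infdist x F)) \<longlonglongrightarrow> indicator (F \<inter> X) x" if "x \<in> X" for x
  proof (cases "x \<in> F")
    case True
    then show ?thesis using that by (simp add: in_closed_iff_infdist_zero[OF F])
  next
    case False
    then have d: "0 < infdist x F"
      using in_closed_iff_infdist_zero[OF F] infdist_nonneg[of x F] by (simp add: order_le_less)
    obtain N :: nat where N: "1 / infdist x F < N" using reals_Archimedean2 by blast
    have "max 0 (1 - real n * infdist x F) = 0" if "N \<le> n" for n
    proof -
      have "1 / infdist x F < n" using N that by (meson less_le_trans of_nat_le_iff)
      then show ?thesis using d by (simp add: field_simps)
    qed
    then have "eventually (\<lambda>n. max 0 (1 - real n * infdist x F) = 0) sequentially"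
      by (auto simp: eventually_sequentially)
    then show ?thesis using False by (simp add: tendsto_eventually)
  qed
  have "(\<lambda>n. integral\<^sup>L M (\<lambda>x. max 0 (1 - real n * infdist x F))) \<longlonglongrightarrow> integral\<^sup>L M (indicator (F \<inter> X))"
  proof (rule integral_dominated_convergence[where w = "\<lambda>x. 1"])
    show "indicator (F \<inter> X) \<in> borel_measurable M" using FX by simp
    show "(\<lambda>x. max 0 (1 - real n * infdist x F)) \<in> borel_measurable M" for n
      using borel_measurable_continuous_on_restrict[of X "\<lambda>x. max 0 (1 - real n * infdist x F)"] sets_M
      by (simp add: continuous_intros cong: measurable_cong_sets)
    show "integrable M (\<lambda>x. 1::real)" using fin by (simp add: finite_measure.integrable_const)
    show "AE x in M. (\<lambda>n. max 0 (1 - real n * infdist x F)) \<longlonglongrightarrow> indicator (F \<inter> X) x"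
      using pointwise space_M by (intro AE_I2) auto
    show "AE x in M. norm (max 0 (1 - real n * infdist x F)) \<le> 1" for n
      by (intro AE_I2) (auto simp: infdist_nonneg)
  qed
  then show ?thesis using FX by simp
qed

lemma sets_restrict_borel_eq_sigma_closed:
  fixes X :: "'a::topological_space set"
  assumes "X \<in> sets borel"
  shows "sets (restrict_space borel X) = sigma_sets X ((\<inter>) X ` Collect closed)"
proof -
  have "sets (borel :: 'a measure) = sigma_sets UNIV (Collect closed)"
    unfolding borel_eq_closed by (simp add: sets_measure_of)
  with assms show ?thesis
    unfolding sets_restrict_space by (simp add: sigma_sets_Int)
qed

lemma finite_measure_eqI_integral_continuous:
  fixes X :: "'a::metric_space set"
  assumes X: "X \<in> sets borel"
    and sets_M: "sets M = sets (restrict_space borel X)" and fin_M: "finite_measure M"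
    and sets_N: "sets N = sets (restrict_space borel X)" and fin_N: "finite_measure N"
    and eq: "\<And>f :: 'a \<Rightarrow> real. continuous_on X f \<Longrightarrow> integral\<^sup>L M f = integral\<^sup>L N f"
  shows "M = N"
proof -
  define E where "E = (\<inter>) X ` Collect closed"
  have closed_eq: "emeasure M (X \<inter> F) = emeasure N (X \<inter> F)" if F: "closed F" for F
  proof (cases "F = {}")
    case False
    have "integral\<^sup>L M (\<lambda>x. max 0 (1 - real n * infdist x F))
        = integral\<^sup>L N (\<lambda>x. max 0 (1 - real n * infdist x F))" for n
      by (rule eq) (intro continuous_intros)
    then have "(\<lambda>n. integral\<^sup>L N (\<lambda>x. max 0 (1 - real n * infdist x F))) \<longlonglongrightarrow> measure M (F \<inter> X)"
      using tendsto_integral_closed_cutoff[OF sets_M fin_M F False] by simp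
    then have "measure M (F \<inter> X) = measure N (F \<inter> X)"
      using tendsto_integral_closed_cutoff[OF sets_N fin_N F False] by (rule LIMSEQ_unique)
    then show ?thesis
      by (simp add: finite_measure.emeasure_eq_measure[OF fin_M] finite_measure.emeasure_eq_measure[OF fin_N]
          Int_commute)
  qed simp
  have sigma_E: "sets (restrict_space borel X) = sigma_sets X E"
    unfolding E_def by (rule sets_restrict_borel_eq_sigma_closed[OF X])
  show "M = N"
  proof (rule measure_eqI_generator_eq[where E = E and \<Omega> = X and A = "\<lambda>_. X"])
    show "Int_stable E"
      unfolding E_def
    proof (rule Int_stableI_image)
      show "\<exists>k\<in>Collect closed. X \<inter> a \<inter> (X \<inter> b) = X \<inter> k" if "a \<in> Collect closed" "b \<in> Collect closed" for a b
        using that by (intro bexI[of _ "a \<inter> b"]) auto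
    qed
    show "E \<subseteq> Pow X" unfolding E_def by auto
    show "emeasure M A = emeasure N A" if "A \<in> E" for A using that closed_eq by (auto simp: E_def)
    show "sets M = sigma_sets X E" "sets N = sigma_sets X E" using sets_M sets_N sigma_E by simp_all
    show "range (\<lambda>_. X) \<subseteq> E" unfolding E_def by (auto intro!: image_eqI[of _ _ UNIV])
    show "(\<Union>i. X) = X" by simp
    show "emeasure M X \<noteq> \<infinity>" for i :: nat by (simp add: finite_measure.emeasure_finite[OF fin_M])
  qed
qed

section \<open>Compact spaces of negative type\<close>

inductive_set exp_span :: "('a \<Rightarrow> 'h::real_inner) \<Rightarrow> ('a \<Rightarrow> real) set" for \<phi> where
  exp_span_exp: "(\<lambda>x. k * exp (inner (\<phi> x) b)) \<in> exp_span \<phi>"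
| exp_span_add: "f \<in> exp_span \<phi> \<Longrightarrow> g \<in> exp_span \<phi> \<Longrightarrow> (\<lambda>x. f x + g x) \<in> exp_span \<phi>"

lemma exp_span_mult:
  assumes "f \<in> exp_span \<phi>" "g \<in> exp_span \<phi>"
  shows "(\<lambda>x. f x * g x) \<in> exp_span \<phi>"
  using assms
proof (induction f rule: exp_span.induct)
  case (exp_span_exp k b)
  show ?case using exp_span_exp
  proof (induction g rule: exp_span.induct)
    case (exp_span_exp k' b')
    have "(\<lambda>x. k * exp (inner (\<phi> x) b) * (k' * exp (inner (\<phi> x) b')))
        = (\<lambda>x. (k * k') * exp (inner (\<phi> x) (b + b')))"
      by (simp add: fun_eq_iff inner_add_right exp_add algebra_simps)
    then show ?case by (simp add: exp_span.exp_span_exp)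
  next
    case (exp_span_add g1 g2)
    then show ?case by (simp add: distrib_left exp_span.exp_span_add)
  qed
next
  case (exp_span_add f1 f2)
  then show ?case by (simp add: distrib_right exp_span.exp_span_add)
qed

lemma exp_span_const: "(\<lambda>x. k) \<in> exp_span \<phi>"
  using exp_span_exp[of k \<phi> 0] by simp

lemma continuous_on_exp_span: "f \<in> exp_span \<phi> \<Longrightarrow> continuous_on S \<phi> \<Longrightarrow> continuous_on S f"
  by (induction f rule: exp_span.induct) (auto intro!: continuous_intros)

locale compact_negative_type =
  fixes X :: "'a::metric_space set" and \<phi> :: "'a \<Rightarrow> 'h::real_inner"
  assumes compact: "compact X"
    and embedding: "\<And>x y. x \<in> X \<Longrightarrow> y \<in> X \<Longrightarrow> dist (\<phi> x) (\<phi> y) = sqrt (dist x y)"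
begin

lemma exp_neg_dist_eq_gaussian:
  "x \<in> X \<Longrightarrow> y \<in> X \<Longrightarrow> exp (- dist x y) = exp (- (norm (\<phi> x - \<phi> y))\<^sup>2)"
  using embedding[of x y] by (simp add: dist_norm)

lemma continuous_on_embedding: "continuous_on X \<phi>"
  unfolding continuous_on_iff
proof (intro ballI allI impI)
  fix x e assume x: "x \<in> X" and e: "(e::real) > 0"
  show "\<exists>d>0. \<forall>x'\<in>X. dist x' x < d \<longrightarrow> dist (\<phi> x') (\<phi> x) < e"
  proof (intro exI[of _ "e\<^sup>2"] conjI ballI impI)
    fix x' assume x': "x' \<in> X" and "dist x' x < e\<^sup>2"
    then have "sqrt (dist x' x) < sqrt (e\<^sup>2)" by (simp only: real_sqrt_less_iff)
    then show "dist (\<phi> x') (\<phi> x) < e" using e embedding[OF x' x] by simp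
  qed (use e in simp)
qed

lemma embedding_inj: "x \<in> X \<Longrightarrow> y \<in> X \<Longrightarrow> \<phi> x = \<phi> y \<Longrightarrow> x = y"
  using embedding[of x y] by simp

lemma discrete_winner_eq_gaussian:
  assumes "fine_partition X r m c A"
  shows "discrete_winner m c A \<mu> \<nu>
    = (\<Sum>i<m. \<Sum>j<m. smeas \<mu> (A i) * smeas \<nu> (A j) * exp (- (norm (\<phi> (c i) - \<phi> (c j)))\<^sup>2))"
  using assms unfolding discrete_winner_def fine_partition_def
  by (intro sum.cong refl) (simp add: exp_neg_dist_eq_gaussian)

lemma winner_self_nonneg:
  assumes \<mu>: "fsm X \<mu>"
  shows "0 \<le> winner \<mu> \<mu>"
proof (rule le_if_le_add_mult_all_pos)
  fix r :: real assume r: "0 < r"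
  then obtain m c A where p: "fine_partition X r m c A" using fine_partition_exists[OF compact] by blast
  have "0 \<le> discrete_winner m c A \<mu> \<mu>"
    unfolding discrete_winner_eq_gaussian[OF p] by (rule gaussian_kernel_psd) simp
  then show "0 \<le> winner \<mu> \<mu> + r * (2 * smass \<mu> * smass \<mu>)"
    using winner_discrete_approx[OF \<mu> \<mu> p] r by simp
qed

lemma discrete_gaussian_sq_le:
  assumes "fine_partition X r m c A"
  shows "(\<Sum>i<m. smeas \<mu> (A i) * exp (- (norm (\<phi> (c i) - v))\<^sup>2))\<^sup>2 \<le> discrete_winner m c A \<mu> \<mu>"
  unfolding discrete_winner_eq_gaussian[OF assms] by (rule gaussian_kernel_cauchy_schwarz)

lemma sint_gaussian_eq_0:
  assumes \<mu>: "fsm X \<mu>" and null: "winner \<mu> \<mu> = 0"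
  shows "sint \<mu> (\<lambda>x. exp (- (norm (\<phi> x - v))\<^sup>2)) = 0"
proof -
  define g where "g x = exp (- (norm (\<phi> x - v))\<^sup>2)" for x
  have g_cont: "continuous_on X g" unfolding g_def by (intro continuous_intros continuous_on_embedding)
  have "\<bar>sint \<mu> g\<bar> \<le> 0"
  proof (rule le_if_le_add_mult_all_pos)
    fix e :: real assume e: "0 < e"
    obtain \<delta> where \<delta>: "0 < \<delta>" and riemann: "\<And>r m c A. fine_partition X r m c A \<Longrightarrow> r \<le> \<delta> \<Longrightarrow>
        \<bar>sint \<mu> g - (\<Sum>i<m. smeas \<mu> (A i) * g (c i))\<bar> \<le> e * smass \<mu>"
      using sint_partition_approx_continuous[OF compact \<mu> g_cont e] by blast
    define r where "r = min \<delta> (e\<^sup>2)"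
    have r: "0 < r" using \<delta> e by (simp add: r_def)
    obtain m c A where p: "fine_partition X r m c A" using fine_partition_exists[OF compact r] by blast
    define S where "S = (\<Sum>i<m. smeas \<mu> (A i) * g (c i))"
    have "S\<^sup>2 \<le> (2 * e * smass \<mu>)\<^sup>2"
    proof -
      have "S\<^sup>2 \<le> discrete_winner m c A \<mu> \<mu>"
        unfolding S_def g_def by (rule discrete_gaussian_sq_le[OF p])
      also have "\<dots> \<le> 2 * r * (smass \<mu> * smass \<mu>)"
        using winner_discrete_approx[OF \<mu> \<mu> p] r null by simp
      also have "\<dots> \<le> 4 * e\<^sup>2 * (smass \<mu> * smass \<mu>)"
        using r by (intro mult_right_mono) (auto simp: r_def min_le_iff_disj)
      finally show ?thesis by (simp add: power2_eq_square mult_ac)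
    qed
    then have "\<bar>S\<bar> \<le> 2 * e * smass \<mu>"
      using e smass_nonneg[of \<mu>] by (simp add: abs_le_square_iff[symmetric])
    moreover have "\<bar>sint \<mu> g - S\<bar> \<le> e * smass \<mu>"
      unfolding S_def by (rule riemann[OF p]) (simp add: r_def)
    ultimately show "\<bar>sint \<mu> g\<bar> \<le> 0 + e * (3 * smass \<mu>)" by linarith
  qed
  then show ?thesis by (simp add: g_def[abs_def])
qed

lemma sint_exp_span_eq_0:
  assumes \<mu>: "fsm X \<mu>" and null: "winner \<mu> \<mu> = 0" and p: "p \<in> exp_span \<phi>"
  shows "sint \<mu> (\<lambda>x. exp (- (norm (\<phi> x))\<^sup>2) * p x) = 0"
  using p
proof (induction p rule: exp_span.induct)
  case (exp_span_exp k b)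
  \<comment> \<open>Completing the square: the product is a multiple of the Gaussian centred at \<open>b / 2\<close>.\<close>
  define a where "a = (1/2) *\<^sub>R b"
  have "(\<lambda>x. exp (- (norm (\<phi> x))\<^sup>2) * (k * exp (inner (\<phi> x) b)))
      = (\<lambda>x. (k * exp (inner a a)) * exp (- (norm (\<phi> x - a))\<^sup>2))"
  proof
    fix x
    have "(norm (\<phi> x - a))\<^sup>2 = (norm (\<phi> x))\<^sup>2 - inner (\<phi> x) b + inner a a"
      unfolding power2_norm_eq_inner by (simp add: inner_diff_left inner_diff_right a_def inner_commute)
    then show "exp (- (norm (\<phi> x))\<^sup>2) * (k * exp (inner (\<phi> x) b))
        = (k * exp (inner a a)) * exp (- (norm (\<phi> x - a))\<^sup>2)"
      by (simp add: exp_add[symmetric] exp_diff exp_minus field_simps)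
  qed
  then show ?case by (simp add: sint_cmult sint_gaussian_eq_0[OF \<mu> null])
next
  case (exp_span_add f g)
  have "continuous_on X (\<lambda>x. exp (- (norm (\<phi> x))\<^sup>2) * h x)" if "h \<in> exp_span \<phi>" for h
    using continuous_on_exp_span[OF that continuous_on_embedding]
    by (intro continuous_intros continuous_on_embedding)
  then have "sintegrable \<mu> (\<lambda>x. exp (- (norm (\<phi> x))\<^sup>2) * h x)" if "h \<in> exp_span \<phi>" for h
    using that by (intro sintegrable_continuous[OF compact \<mu>])
  with exp_span_add show ?case
    by (simp add: distrib_left sint_add)
qed

lemma function_ring_on_exp_span: "function_ring_on (exp_span \<phi>) X"
proof
  show "compact X" by (rule compact)
  show "continuous_on X f" if "f \<in> exp_span \<phi>" for f
    by (rule continuous_on_exp_span[OF that continuous_on_embedding])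
  show "(\<lambda>x. f x + g x) \<in> exp_span \<phi>" if "f \<in> exp_span \<phi>" "g \<in> exp_span \<phi>" for f g
    using that by (rule exp_span_add)
  show "(\<lambda>x. f x * g x) \<in> exp_span \<phi>" if "f \<in> exp_span \<phi>" "g \<in> exp_span \<phi>" for f g
    using that by (rule exp_span_mult)
  show "(\<lambda>x. k) \<in> exp_span \<phi>" for k by (rule exp_span_const)
  show "\<exists>f\<in>exp_span \<phi>. f x \<noteq> f y" if "x \<in> X" "y \<in> X" "x \<noteq> y" for x y
  proof
    have "\<phi> x - \<phi> y \<noteq> 0" using embedding_inj that by auto
    then have "0 < inner (\<phi> x - \<phi> y) (\<phi> x - \<phi> y)" by simp
    then have "inner (\<phi> y) (\<phi> x - \<phi> y) < inner (\<phi> x) (\<phi> x - \<phi> y)"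
      by (simp only: inner_diff_left)
    then show "1 * exp (inner (\<phi> x) (\<phi> x - \<phi> y)) \<noteq> 1 * exp (inner (\<phi> y) (\<phi> x - \<phi> y))"
      by simp
  qed (rule exp_span_exp)
qed

lemma sint_continuous_eq_0:
  assumes \<mu>: "fsm X \<mu>" and null: "winner \<mu> \<mu> = 0" and f: "continuous_on X f"
  shows "sint \<mu> f = 0"
proof -
  define \<rho> where "\<rho> x = exp (- (norm (\<phi> x))\<^sup>2)" for x
  have \<rho>_cont: "continuous_on X \<rho>" unfolding \<rho>_def by (intro continuous_intros continuous_on_embedding)
  have \<rho>_pos: "0 < \<rho> x" "\<rho> x \<le> 1" for x by (auto simp: \<rho>_def)
  interpret function_ring_on "exp_span \<phi>" X by (rule function_ring_on_exp_span)
  have "sint \<mu> (\<lambda>x. \<rho> x * g x) = 0" if g: "continuous_on X g" for g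
  proof -
    have "\<bar>sint \<mu> (\<lambda>x. \<rho> x * g x)\<bar> \<le> 0"
    proof (rule le_if_le_add_mult_all_pos)
      fix e :: real assume e: "0 < e"
      obtain p where p: "p \<in> exp_span \<phi>" "\<forall>x\<in>X. \<bar>g x - p x\<bar> < e"
        using Stone_Weierstrass_basic[OF g e] by blast
      have p_cont: "continuous_on X p" by (rule continuous_on_exp_span[OF p(1) continuous_on_embedding])
      have "sint \<mu> (\<lambda>x. \<rho> x * g x) = sint \<mu> (\<lambda>x. \<rho> x * g x - \<rho> x * p x)"
        using sint_exp_span_eq_0[OF \<mu> null p(1)] g p_cont \<rho>_cont
        by (subst sint_diff) (auto simp: \<rho>_def intro!: sintegrable_continuous[OF compact \<mu>] continuous_intros)
      also have "\<bar>\<dots>\<bar> \<le> e * smass \<mu>"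
      proof (rule abs_sint_le[OF \<mu>])
        show "(\<lambda>x. \<rho> x * g x - \<rho> x * p x) \<in> borel_measurable (restrict_space borel X)"
          using g p_cont \<rho>_cont by (intro borel_measurable_continuous_on_restrict continuous_intros)
        show "\<bar>\<rho> x * g x - \<rho> x * p x\<bar> \<le> e" if "x \<in> X" for x
        proof -
          have "\<bar>\<rho> x * g x - \<rho> x * p x\<bar> = \<rho> x * \<bar>g x - p x\<bar>"
            using \<rho>_pos[of x] by (simp add: abs_mult right_diff_distrib[symmetric])
          also have "\<dots> \<le> 1 * e" using \<rho>_pos[of x] p(2) that by (intro mult_mono) auto
          finally show ?thesis by simp
        qed
      qed
      finally show "\<bar>sint \<mu> (\<lambda>x. \<rho> x * g x)\<bar> \<le> 0 + e * smass \<mu>" by simp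
    qed
    then show ?thesis by simp
  qed
  moreover have "continuous_on X (\<lambda>x. f x / \<rho> x)"
    using f \<rho>_cont \<rho>_pos by (intro continuous_intros) (auto simp: less_imp_neq[symmetric])
  ultimately have "sint \<mu> (\<lambda>x. \<rho> x * (f x / \<rho> x)) = 0" by blast
  moreover have "\<rho> x * (f x / \<rho> x) = f x" for x using \<rho>_pos[of x] by simp
  ultimately show ?thesis by simp
qed

lemma winner_self_eq_0_iff:
  assumes \<mu>: "fsm X \<mu>"
  shows "winner \<mu> \<mu> = 0 \<longleftrightarrow> fst \<mu> = snd \<mu>"
proof
  assume "winner \<mu> \<mu> = 0"
  then have "integral\<^sup>L (fst \<mu>) f = integral\<^sup>L (snd \<mu>) f" if "continuous_on X f" for f :: "'a \<Rightarrow> real"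
    using sint_continuous_eq_0[OF \<mu> _ that] by (simp add: sint_def)
  then show "fst \<mu> = snd \<mu>"
    using compact_imp_closed[OF compact] fsmD[OF \<mu>]
    by (intro finite_measure_eqI_integral_continuous[of X]) auto
qed (simp add: winner_def sint_def)

section \<open>Minimisers and weights\<close>

lemma winner_self_pos_if_mass_one:
  assumes \<mu>: "fsm X \<mu>" and mass: "smeas \<mu> X = 1"
  shows "0 < winner \<mu> \<mu>"
proof -
  have "winner \<mu> \<mu> \<noteq> 0"
    using mass winner_self_eq_0_iff[OF \<mu>] by (auto simp: smeas_def)
  then show ?thesis using winner_self_nonneg[OF \<mu>] by simp
qed

lemma attains_magnitude_iff_minimal:
  "attains_magnitude X \<mu> \<longleftrightarrow> fsm X \<mu> \<and> smeas \<mu> X = 1 \<and>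
     (\<forall>\<nu>. fsm X \<nu> \<and> smeas \<nu> X = 1 \<longrightarrow> winner \<mu> \<mu> \<le> winner \<nu> \<nu>)"
proof -
  have "magnitude X = ereal (1 / winner \<mu> \<mu>)
      \<longleftrightarrow> (\<forall>\<nu>. fsm X \<nu> \<and> smeas \<nu> X = 1 \<longrightarrow> winner \<mu> \<mu> \<le> winner \<nu> \<nu>)"
    if \<mu>: "fsm X \<mu>" "smeas \<mu> X = 1"
  proof -
    have le_iff: "1 / winner \<nu> \<nu> \<le> 1 / winner \<mu> \<mu> \<longleftrightarrow> winner \<mu> \<mu> \<le> winner \<nu> \<nu>"
      if "fsm X \<nu>" "smeas \<nu> X = 1" for \<nu>
      using winner_self_pos_if_mass_one[OF that] winner_self_pos_if_mass_one[OF \<mu>] by (simp add: field_simps)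
    have upper: "ereal (1 / winner \<mu> \<mu>) \<le> magnitude X"
      unfolding magnitude_def using \<mu> by (intro SUP_upper) auto
    show ?thesis
    proof
      assume "magnitude X = ereal (1 / winner \<mu> \<mu>)"
      then have "1 / winner \<nu> \<nu> \<le> 1 / winner \<mu> \<mu>" if "fsm X \<nu>" "smeas \<nu> X = 1" for \<nu>
        unfolding magnitude_def using that by (metis (mono_tags) SUP_upper ereal_less_eq(3) mem_Collect_eq)
      then show "\<forall>\<nu>. fsm X \<nu> \<and> smeas \<nu> X = 1 \<longrightarrow> winner \<mu> \<mu> \<le> winner \<nu> \<nu>" using le_iff by blast
    next
      assume "\<forall>\<nu>. fsm X \<nu> \<and> smeas \<nu> X = 1 \<longrightarrow> winner \<mu> \<mu> \<le> winner \<nu> \<nu>"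
      then have "magnitude X \<le> ereal (1 / winner \<mu> \<mu>)"
        unfolding magnitude_def using le_iff by (intro SUP_least) auto
      with upper show "magnitude X = ereal (1 / winner \<mu> \<mu>)" by (rule antisym[rotated])
    qed
  qed
  then show ?thesis unfolding attains_magnitude_def by blast
qed

lemma Zop_eq_winner_self_if_attains:
  assumes att: "attains_magnitude X \<mu>" and x: "x \<in> X"
  shows "Zop \<mu> x = winner \<mu> \<mu>"
proof -
  have \<mu>: "fsm X \<mu>" and mass: "smeas \<mu> X = 1"
    and minimal: "\<And>\<nu>. fsm X \<nu> \<Longrightarrow> smeas \<nu> X = 1 \<Longrightarrow> winner \<mu> \<mu> \<le> winner \<nu> \<nu>"
    using att by (auto simp: attains_magnitude_iff_minimal)
  define \<rho> where "\<rho> = slincomb 1 (sdirac X x) (- 1) \<mu>"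
  have \<rho>: "fsm X \<rho>" unfolding \<rho>_def by (intro fsm_slincomb fsm_sdirac x \<mu>)
  have mass_\<rho>: "smeas \<rho> X = 0"
    unfolding \<rho>_def using mass x
    by (simp add: smeas_slincomb[OF fsm_sdirac[OF x] \<mu> space_in_sets_restrict_borel] smeas_sdirac_space)
  have cross: "winner \<mu> \<rho> = Zop \<mu> x - winner \<mu> \<mu>"
    unfolding \<rho>_def using x by (simp add: winner_slincomb_right[OF fsm_sdirac[OF x] \<mu> \<mu>] winner_sdirac_right[OF \<mu>])
  \<comment> \<open>\<open>t = 0\<close> minimises \<open>winner (\<mu> + t \<rho>) (\<mu> + t \<rho>)\<close>, so the linear coefficient vanishes.\<close>
  have "0 \<le> 0 + 2 * t * winner \<mu> \<rho> + t\<^sup>2 * winner \<rho> \<rho>" for t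
  proof -
    have "smeas (slincomb 1 \<mu> t \<rho>) X = 1"
      using mass mass_\<rho> by (simp add: smeas_slincomb[OF \<mu> \<rho> space_in_sets_restrict_borel])
    then have "winner \<mu> \<mu> \<le> winner (slincomb 1 \<mu> t \<rho>) (slincomb 1 \<mu> t \<rho>)"
      by (intro minimal fsm_slincomb \<mu> \<rho>)
    then show ?thesis by (simp add: winner_slincomb_self[OF compact \<mu> \<rho>])
  qed
  then have "(winner \<mu> \<rho>)\<^sup>2 \<le> 0 * winner \<rho> \<rho>"
    by (intro quadratic_nonneg_imp_discriminant_le winner_self_nonneg[OF \<rho>])
  then show ?thesis using cross by simp
qed

lemma weight_if_attains:
  assumes att: "attains_magnitude X \<mu>"
  shows "is_weight X (slincomb (1 / winner \<mu> \<mu>) \<mu> 0 \<mu>)"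
proof -
  have \<mu>: "fsm X \<mu>" and pos: "0 < winner \<mu> \<mu>"
    using att winner_self_pos_if_mass_one by (auto simp: attains_magnitude_def)
  show ?thesis
    unfolding is_weight_def
    using Zop_eq_winner_self_if_attains[OF att] pos by (simp add: fsm_slincomb[OF \<mu> \<mu>] Zop_slincomb[OF \<mu> \<mu>])
qed

lemma winner_weight_left:
  assumes w: "is_weight X w" and \<nu>: "fsm X \<nu>"
  shows "winner w \<nu> = smeas \<nu> X"
proof -
  have "winner w \<nu> = sint \<nu> (\<lambda>_. 1)"
    unfolding winner_def using w by (intro sint_cong[OF \<nu>]) (simp add: is_weight_def)
  then show ?thesis by (simp add: sint_const[OF \<nu>])
qed

lemma weight_mass_pos:
  assumes w: "is_weight X w" and ne: "X \<noteq> {}"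
  shows "0 < smeas w X"
proof -
  have w_fsm: "fsm X w" using w by (simp add: is_weight_def)
  obtain x where x: "x \<in> X" using ne by blast
  have "winner w w \<noteq> 0"
  proof
    assume "winner w w = 0"
    then have "Zop w x = 0" by (simp add: winner_self_eq_0_iff[OF w_fsm] Zop_def sint_def)
    then show False using w x by (simp add: is_weight_def)
  qed
  then show ?thesis using winner_self_nonneg[OF w_fsm] winner_weight_left[OF w w_fsm] by simp
qed

lemma
  assumes w: "is_weight X w" and ne: "X \<noteq> {}"
  shows winner_normalized_weight:
      "winner (slincomb (1 / smeas w X) w 0 w) (slincomb (1 / smeas w X) w 0 w) = 1 / smeas w X"
    and winner_sub_normalized_weight: "fsm X \<nu> \<Longrightarrow> smeas \<nu> X = 1 \<Longrightarrow>
      winner (slincomb 1 \<nu> (- 1 / smeas w X) w) (slincomb 1 \<nu> (- 1 / smeas w X) w)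
        = winner \<nu> \<nu> - 1 / smeas w X"
proof -
  have w_fsm: "fsm X w" using w by (simp add: is_weight_def)
  have W: "winner w w = smeas w X" "0 < smeas w X"
    using winner_weight_left[OF w w_fsm] weight_mass_pos[OF w ne] by auto
  then show "winner (slincomb (1 / smeas w X) w 0 w) (slincomb (1 / smeas w X) w 0 w) = 1 / smeas w X"
    by (simp add: winner_slincomb_self[OF compact w_fsm w_fsm] power2_eq_square)
  assume \<nu>: "fsm X \<nu>" and mass: "smeas \<nu> X = 1"
  have "winner \<nu> w = 1"
    using winner_commute[OF compact \<nu> w_fsm] winner_weight_left[OF w \<nu>] mass by simp
  with W show "winner (slincomb 1 \<nu> (- 1 / smeas w X) w) (slincomb 1 \<nu> (- 1 / smeas w X) w)
      = winner \<nu> \<nu> - 1 / smeas w X"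
    by (simp add: winner_slincomb_self[OF compact \<nu> w_fsm] power2_eq_square field_simps)
qed

lemma winner_le_iff_normalized_weight:
  assumes w: "is_weight X w" and ne: "X \<noteq> {}" and \<nu>: "fsm X \<nu>" and mass: "smeas \<nu> X = 1"
  shows "winner \<nu> \<nu> \<le> 1 / smeas w X \<longleftrightarrow>
    (\<forall>A\<in>sets (restrict_space borel X). smeas \<nu> A = smeas w A / smeas w X)"
proof -
  define W where "W = smeas w X"
  define \<rho> where "\<rho> = slincomb 1 \<nu> (- 1 / W) w"
  have w_fsm: "fsm X w" using w by (simp add: is_weight_def)
  have \<rho>: "fsm X \<rho>" unfolding \<rho>_def by (rule fsm_slincomb[OF \<nu> w_fsm])
  have "winner \<rho> \<rho> = winner \<nu> \<nu> - 1 / W"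
    unfolding \<rho>_def W_def by (rule winner_sub_normalized_weight[OF w ne \<nu> mass])
  then have "winner \<nu> \<nu> \<le> 1 / W \<longleftrightarrow> winner \<rho> \<rho> = 0"
    using winner_self_nonneg[OF \<rho>] by auto
  also have "\<dots> \<longleftrightarrow> fst \<rho> = snd \<rho>" by (rule winner_self_eq_0_iff[OF \<rho>])
  also have "\<dots> \<longleftrightarrow> (\<forall>A\<in>sets (restrict_space borel X). smeas \<rho> A = 0)"
    by (rule fst_eq_snd_iff_smeas_eq_0[OF \<rho>])
  also have "\<dots> \<longleftrightarrow> (\<forall>A\<in>sets (restrict_space borel X). smeas \<nu> A = smeas w A / W)"
  proof (rule ball_cong[OF refl])
    fix A assume "A \<in> sets (restrict_space borel X)"
    then show "smeas \<rho> A = 0 \<longleftrightarrow> smeas \<nu> A = smeas w A / W"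
      using weight_mass_pos[OF w ne] by (simp add: \<rho>_def smeas_slincomb[OF \<nu> w_fsm] W_def field_simps)
  qed
  finally show ?thesis by (simp add: W_def)
qed

lemma attains_magnitude_iff_weight:
  assumes w: "is_weight X w" and ne: "X \<noteq> {}"
  shows "attains_magnitude X \<nu> \<longleftrightarrow>
    fsm X \<nu> \<and> (\<forall>A\<in>sets (restrict_space borel X). smeas \<nu> A = smeas w A / smeas w X)"
proof -
  define W where "W = smeas w X"
  define \<nu>\<^sub>0 where "\<nu>\<^sub>0 = slincomb (1 / W) w 0 w"
  have w_fsm: "fsm X w" using w by (simp add: is_weight_def)
  have W: "0 < W" unfolding W_def by (rule weight_mass_pos[OF w ne])
  have \<nu>\<^sub>0: "fsm X \<nu>\<^sub>0" "smeas \<nu>\<^sub>0 X = 1" "winner \<nu>\<^sub>0 \<nu>\<^sub>0 = 1 / W"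
    unfolding \<nu>\<^sub>0_def W_def using W winner_normalized_weight[OF w ne]
    by (auto simp: fsm_slincomb[OF w_fsm w_fsm] smeas_slincomb[OF w_fsm w_fsm space_in_sets_restrict_borel] W_def)
  have lower: "1 / W \<le> winner \<nu>' \<nu>'" if "fsm X \<nu>'" "smeas \<nu>' X = 1" for \<nu>'
    using winner_sub_normalized_weight[OF w ne that]
      winner_self_nonneg[OF fsm_slincomb[OF that(1) w_fsm, of 1 "- 1 / W"]]
    by (simp add: W_def)
  have "attains_magnitude X \<nu> \<longleftrightarrow> fsm X \<nu> \<and> smeas \<nu> X = 1 \<and> winner \<nu> \<nu> \<le> 1 / W"
    unfolding attains_magnitude_iff_minimal using \<nu>\<^sub>0 lower by (metis order_trans)
  also have "\<dots> \<longleftrightarrow> fsm X \<nu> \<and> (\<forall>A\<in>sets (restrict_space borel X). smeas \<nu> A = smeas w A / W)"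
  proof (cases "fsm X \<nu>")
    case \<nu>: True
    have "smeas \<nu> X = 1" if "\<forall>A\<in>sets (restrict_space borel X). smeas \<nu> A = smeas w A / W"
      using that space_in_sets_restrict_borel[of X] W by (simp add: W_def)
    with winner_le_iff_normalized_weight[OF w ne \<nu>] show ?thesis by (auto simp: W_def)
  qed simp
  finally show ?thesis by (simp add: W_def)
qed

lemma attains_magnitude_normalized_weight:
  assumes w: "is_weight X w" and ne: "X \<noteq> {}"
  shows "attains_magnitude X (slincomb (1 / smeas w X) w 0 w)"
proof -
  have w_fsm: "fsm X w" using w by (simp add: is_weight_def)
  show ?thesis
    unfolding attains_magnitude_iff_weight[OF w ne]
    by (simp add: fsm_slincomb[OF w_fsm w_fsm] smeas_slincomb[OF w_fsm w_fsm])
qed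

lemma magnitude_eq_weight_mass:
  assumes w: "is_weight X w" and ne: "X \<noteq> {}"
  shows "magnitude X = ereal (smeas w X)"
  using attains_magnitude_normalized_weight[OF w ne] winner_normalized_weight[OF w ne]
    weight_mass_pos[OF w ne]
  by (simp add: attains_magnitude_def)

end

theorem proposition2p3:
  fixes X :: "'a::metric_space set"
    and \<phi> :: "'a \<Rightarrow> 'h::{real_inner, complete_space}"
  assumes "compact X" and "X \<noteq> {}"
    and negtype: "\<forall>x\<in>X. \<forall>y\<in>X. dist (\<phi> x) (\<phi> y) = sqrt (dist x y)"
  shows "(weighted X \<longleftrightarrow> (\<exists>w. is_weight X w)) \<and>
         (\<forall>w. is_weight X w \<longrightarrow>
              smeas w X \<noteq> 0 \<and> magnitude X = ereal (smeas w X) \<and>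
              (\<forall>\<mu>. attains_magnitude X \<mu> \<longleftrightarrow>
                   (fsm X \<mu> \<and> (\<forall>A\<in>sets (restrict_space borel X).
                                  smeas \<mu> A = smeas w A / smeas w X))))"
proof -
  interpret compact_negative_type X \<phi>
    using assms by unfold_locales auto
  have "weighted X \<longleftrightarrow> (\<exists>w. is_weight X w)"
    unfolding weighted_def
    using weight_if_attains attains_magnitude_normalized_weight[OF _ assms(2)] by blast
  moreover have "smeas w X \<noteq> 0" if "is_weight X w" for w
    using weight_mass_pos[OF that assms(2)] by simp
  ultimately show ?thesis
    using magnitude_eq_weight_mass[OF _ assms(2)] attains_magnitude_iff_weight[OF _ assms(2)] by blast
qed

end
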